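(* Let $k$ be a field and let $F(X,Y)$ be an irreducible element of $A=k[X,Y]$. Then $A/(F)$ is $k$-rational if and only if there exist $x(T),y(T),z(T)\in k[T]$ such that: (1) $z(T)\ne0$, $\{x(T)/z(T),\,y(T)/z(T)\}\not\subseteq k$, and $F\big(x(T)/z(T),\,y(T)/z(T)\big)=0$; (2) $\max(\deg_T x,\deg_T y,\deg_T z)\le \deg_X F+\deg_Y F$.
   Context: $A/(F)$ is $k$-rational means that $F$ is irreducible in $A$ and $\operatorname{Frac}(A/(F))$ is a purely transcendental extension of $k$ of transcendence degree $1$. $T$ is an indeterminate. *)

theory Defs
  imports "HOL-Computational_Algebra.Polynomial" "HOL-Computational_Algebra.Fraction_Field"
begin

text \<open>A = k[X,Y] is rendered as 'a poly poly: outer variable Y, coefficients in k[X].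
  k(T) is rendered as 'a poly fract.\<close>

definition to_fract :: "'a::idom \<Rightarrow> 'a fract" where
  "to_fract a = Fract a 1"

definition const_fract :: "'a::field \<Rightarrow> 'a poly fract" where
  "const_fract c = to_fract [:c:]"

definition eval2 :: "'a::field poly poly \<Rightarrow> 'a poly fract \<Rightarrow> 'a poly fract \<Rightarrow> 'a poly fract" where
  "eval2 G u v = poly (map_poly (\<lambda>c. poly (map_poly const_fract c) u) G) v"

definition degX :: "'a::zero poly poly \<Rightarrow> nat" where
  "degX F = Max ((\<lambda>i. degree (coeff F i)) ` {..degree F})"

definition degY :: "'a::zero poly poly \<Rightarrow> nat" where
  "degY F = degree F"

text \<open>k-rational: F irreducible and Frac(A/(F)) is k-isomorphic to k(T). A k-algebra
  embedding A/(F) -> k(T) is evaluation at some (u,v) whose kernel is exactly (F);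
  k(T) is the fraction field of the image iff every element of k(T) is a quotient of
  values of the embedding.\<close>
definition k_rational :: "'a::field poly poly \<Rightarrow> bool" where
  "k_rational F \<longleftrightarrow> irreducible F \<and>
     (\<exists>u v. (\<forall>G. eval2 G u v = 0 \<longleftrightarrow> F dvd G) \<and>
            (\<forall>w. \<exists>G H. eval2 H u v \<noteq> 0 \<and> w = eval2 G u v / eval2 H u v))"

end

(* If A/(F) is k-rational, X and Y go to rational functions u, v with k(u, v) = k(T). For
   u = g/h in lowest terms, T has degree max(deg g, deg h) over k(u), with minimal polynomial
   g(Z) - u h(Z); since k(u, v) = k(u)[v] has dimension at most deg_Y F over k(u), this degree is at
   most deg_Y F. Symmetrically for v, and a common denominator gives the bound.
   Conversely, for a non-constant zero (u, v) of F, Lueroth's theorem gives k(u, v) = k(theta),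
   proved by the classical argument with h(T) g(Z) - g(T) h(Z) for theta = g/h of least degree in
   k(u, v). Pulling (u, v) back along the substitution T := theta gives a zero of F generating k(T),
   and since u or v is transcendental over k, the kernel of evaluation there is (F). *)

theory Submission
  imports Defs "HOL-Computational_Algebra.Polynomial_Factorial"
begin

hide_const (open) Polynomial_Factorial.to_fract

instantiation fract :: (idom)
  "{unique_euclidean_ring, normalization_euclidean_semiring, normalization_semidom_multiplicative}"
begin
definition [simp]: "normalize_fract = (\<lambda>x::'a fract. if x = 0 then 0 else (1::'a fract))"
definition [simp]: "unit_factor_fract = (\<lambda>x::'a fract. x)"
definition [simp]: "modulo_fract = (\<lambda>x y::'a fract. if y = 0 then x else (0::'a fract))"
definition [simp]: "euclidean_size_fract = (\<lambda>x::'a fract. if x = 0 then 0 else (1::nat))"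
definition [simp]: "division_segment (x :: 'a fract) = (1::'a fract)"
instance
  by standard (simp_all add: dvd_field_iff field_split_simps split: if_splits)
end

instantiation fract :: (idom) euclidean_ring_gcd
begin
definition "gcd_fract = (Euclidean_Algorithm.gcd :: 'a fract \<Rightarrow> _)"
definition "lcm_fract = (Euclidean_Algorithm.lcm :: 'a fract \<Rightarrow> _)"
definition "Gcd_fract = (Euclidean_Algorithm.Gcd :: 'a fract set \<Rightarrow> _)"
definition "Lcm_fract = (Euclidean_Algorithm.Lcm :: 'a fract set \<Rightarrow> _)"
instance by standard (simp_all add: gcd_fract_def lcm_fract_def Gcd_fract_def Lcm_fract_def)
end

instance fract :: (idom) field_gcd ..

locale comm_ring_hom =
  fixes f :: "'a::comm_ring_1 \<Rightarrow> 'b::comm_ring_1"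
  assumes hom_add [simp]: "f (x + y) = f x + f y"
    and hom_mult [simp]: "f (x * y) = f x * f y"
    and hom_one [simp]: "f 1 = 1"
begin

lemma hom_zero [simp]: "f 0 = 0"
  using hom_add[of 0 0] by simp

lemma hom_uminus [simp]: "f (- x) = - f x"
  using hom_add[of x "- x"] by (simp add: add_eq_0_iff)

lemma hom_diff [simp]: "f (x - y) = f x - f y"
  using hom_add[of x "- y"] by simp

lemma hom_sum: "f (sum g A) = (\<Sum>x\<in>A. f (g x))"
  by (induction A rule: infinite_finite_induct) auto

lemma hom_power [simp]: "f (x ^ n) = f x ^ n"
  by (induction n) auto

lemma map_poly_add [simp]: "map_poly f (p + q) = map_poly f p + map_poly f q"
  by (rule poly_eqI) (simp add: coeff_map_poly)

lemma map_poly_mult [simp]: "map_poly f (p * q) = map_poly f p * map_poly f q"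
  by (rule poly_eqI) (simp add: coeff_map_poly coeff_mult hom_sum)

lemma map_poly_smult [simp]: "map_poly f (smult c p) = smult (f c) (map_poly f p)"
  by (rule poly_eqI) (simp add: coeff_map_poly)

lemma poly_map_poly: "poly (map_poly f p) (f x) = f (poly p x)"
  by (induction p) (auto simp: map_poly_pCons)

lemma comm_ring_hom_map_poly: "comm_ring_hom (map_poly f)"
  by unfold_locales (auto simp: map_poly_pCons)

lemma comm_ring_hom_poly_map_poly: "comm_ring_hom (\<lambda>p. poly (map_poly f p) x)"
  by unfold_locales (auto simp: poly_mult)

end

locale field_hom = comm_ring_hom f for f :: "'a::field \<Rightarrow> 'b::field"
begin

lemma hom_eq_0_iff [simp]: "f x = 0 \<longleftrightarrow> x = 0"
proof
  assume "f x = 0"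
  show "x = 0"
  proof (rule ccontr)
    assume "x \<noteq> 0"
    then have "f 1 = 0" using \<open>f x = 0\<close> by (metis hom_mult right_inverse mult_zero_left)
    then show False by simp
  qed
qed simp

lemma hom_inject [simp]: "f x = f y \<longleftrightarrow> x = y"
  using hom_eq_0_iff[of "x - y"] by (simp del: hom_eq_0_iff)

lemma hom_divide [simp]: "f (x / y) = f x / f y"
proof (cases "y = 0")
  case False
  then have "f (x / y) * f y = f x" by (simp flip: hom_mult)
  then show ?thesis using False by (simp add: field_simps)
qed simp

end

locale comm_ring_iso = comm_ring_hom f for f :: "'a::comm_ring_1 \<Rightarrow> 'b::comm_ring_1" +
  assumes bij: "bij f"
begin

lemma hom_inject [simp]: "f x = f y \<longleftrightarrow> x = y"
  using bij by (auto dest: bij_is_inj injD)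

lemma hom_eq_0_iff [simp]: "f x = 0 \<longleftrightarrow> x = 0"
  using hom_inject[of x 0] by simp

lemma all_hom_iff: "(\<forall>y. P y) \<longleftrightarrow> (\<forall>x. P (f x))"
  using bij by (metis bij_pointE)

lemma ex_hom_iff: "(\<exists>y. P y) \<longleftrightarrow> (\<exists>x. P (f x))"
  using bij by (metis bij_pointE)

lemma hom_dvd_iff [simp]: "f x dvd f y \<longleftrightarrow> x dvd y"
proof
  assume "f x dvd f y"
  then obtain c where "f y = f x * c" by (elim dvdE)
  moreover obtain c' where "c = f c'" using bij by (metis bij_pointE)
  ultimately have "y = x * c'" by (simp flip: hom_mult)
  then show "x dvd y" by simp
qed (auto elim: dvdE)

lemma hom_irreducible_iff [simp]: "irreducible (f x) \<longleftrightarrow> irreducible x"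
proof -
  have unit_iff: "f a dvd 1 \<longleftrightarrow> a dvd 1" for a using hom_dvd_iff[of a 1] by simp
  have "(\<forall>a b. f x = a * b \<longrightarrow> a dvd 1 \<or> b dvd 1) \<longleftrightarrow> (\<forall>a b. x = a * b \<longrightarrow> a dvd 1 \<or> b dvd 1)"
    by (subst all_hom_iff, subst all_hom_iff) (simp add: unit_iff flip: hom_mult)
  then show ?thesis by (simp add: irreducible_def unit_iff)
qed

lemma comm_ring_iso_map_poly: "comm_ring_iso (map_poly f)"
proof -
  interpret map_poly: comm_ring_hom "map_poly f" by (rule comm_ring_hom_map_poly)
  have "inj (map_poly f)" by (rule injI) (metis coeff_map_poly hom_zero hom_inject poly_eqI)
  moreover have "map_poly f (map_poly (inv f) q) = q" for q
  proof -
    have "inv f 0 = 0" using bij by (metis bij_inv_eq_iff hom_zero)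
    then show ?thesis
      using bij by (subst map_poly_map_poly) (simp_all add: o_def bij_is_surj surj_f_inv_f)
  qed
  then have "surj (map_poly f)" by (metis surjI)
  ultimately show ?thesis by unfold_locales (simp add: bij_def)
qed

end

lemma Polynomial_Factorial_to_fract_eq: "Polynomial_Factorial.to_fract = to_fract"
  by (rule ext) (simp add: Defs.to_fract_def Polynomial_Factorial.to_fract_def)

lemmas to_fract_eq_iff [simp] = to_fract_eq_iff[unfolded Polynomial_Factorial_to_fract_eq]
lemmas to_fract_eq_0_iff [simp] = to_fract_eq_0_iff[unfolded Polynomial_Factorial_to_fract_eq]
lemmas fract_poly_dvdD = fract_poly_dvdD[unfolded Polynomial_Factorial_to_fract_eq]
lemmas fract_poly_eq_iff = fract_poly_eq_iff[unfolded Polynomial_Factorial_to_fract_eq]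
lemmas content_decompose_fract = content_decompose_fract[unfolded Polynomial_Factorial_to_fract_eq]

interpretation to_fract: comm_ring_hom "to_fract :: 'a::idom \<Rightarrow> 'a fract"
  by unfold_locales (simp_all flip: Polynomial_Factorial_to_fract_eq)

interpretation const_fract: field_hom "const_fract :: 'a::field \<Rightarrow> 'a poly fract"
  by unfold_locales
    (simp_all add: const_fract_def flip: to_fract.hom_add to_fract.hom_mult one_pCons)

definition eval1 :: "'a::field poly \<Rightarrow> 'a poly fract \<Rightarrow> 'a poly fract" where
  "eval1 a u = poly (map_poly const_fract a) u"

interpretation eval1: comm_ring_hom "\<lambda>a. eval1 a u"
  unfolding eval1_def by (rule const_fract.comm_ring_hom_poly_map_poly)

lemma eval1_const [simp]: "eval1 [:c:] u = const_fract c"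
  by (simp add: eval1_def map_poly_pCons)

lemma eval1_X [simp]: "eval1 [:0, 1:] u = u"
  by (simp add: eval1_def map_poly_pCons)

lemma eval1_pCons: "eval1 (pCons c a) u = const_fract c + u * eval1 a u"
  by (simp add: eval1_def map_poly_pCons)

lemma eval2_conv_eval1: "eval2 G u v = poly (map_poly (\<lambda>c. eval1 c u) G) v"
  by (simp add: eval2_def eval1_def)

interpretation eval2: comm_ring_hom "\<lambda>G. eval2 G u v"
  unfolding eval2_conv_eval1 by (rule eval1.comm_ring_hom_poly_map_poly)

lemma eval2_pCons: "eval2 (pCons a G) u v = eval1 a u + v * eval2 G u v"
  by (simp add: eval2_conv_eval1 map_poly_pCons)

lemma eval2_const [simp]: "eval2 [:a:] u v = eval1 a u"
  by (simp add: eval2_conv_eval1 map_poly_pCons)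

lemma eval2_smult [simp]: "eval2 (smult a G) u v = eval1 a u * eval2 G u v"
proof -
  have "smult a G = [:a:] * G" by simp
  then show ?thesis by (metis eval2.hom_mult eval2_const)
qed

definition T_fract :: "'a::field poly fract" where
  "T_fract = to_fract [:0, 1:]"

lemma eval1_T_fract [simp]: "eval1 a T_fract = to_fract a"
  by (induction a)
    (simp_all add: eval1_pCons T_fract_def const_fract_def flip: to_fract.hom_mult to_fract.hom_add)

lemma to_fract_smult [simp]: "to_fract (smult c p) = const_fract c * to_fract p"
  by (simp add: const_fract_def flip: to_fract.hom_mult)

lemma T_fract_not_const: "T_fract \<notin> range const_fract"
  by (auto simp: T_fract_def const_fract_def)

lemma to_fract_divide_eq_iff:
  assumes "q \<noteq> 0" "q' \<noteq> 0"
  shows "to_fract p / to_fract q = to_fract p' / to_fract q' \<longleftrightarrow> p * q' = p' * q"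
  using assms by (simp add: field_simps flip: to_fract.hom_mult)

definition fract_num :: "'a::field_gcd poly fract \<Rightarrow> 'a poly" where
  "fract_num w = fst (quot_of_fract w)"

definition fract_den :: "'a::field_gcd poly fract \<Rightarrow> 'a poly" where
  "fract_den w = snd (quot_of_fract w)"

definition fract_degree :: "'a::field_gcd poly fract \<Rightarrow> nat" where
  "fract_degree w = max (degree (fract_num w)) (degree (fract_den w))"

lemma fract_den_nonzero [simp]: "fract_den w \<noteq> 0"
  by (simp add: fract_den_def)

lemma fract_num_den: "w = to_fract (fract_num w) / to_fract (fract_den w)"
  using Fract_quot_of_fract[of w]
  by (simp add: fract_num_def fract_den_def Fract_conv_to_fract Polynomial_Factorial_to_fract_eq)

lemma coprime_fract_num_den: "coprime (fract_num w) (fract_den w)"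
  unfolding fract_num_def fract_den_def by (rule coprime_quot_of_fract)

lemma fract_num_den_mult: "w * to_fract (fract_den w) = to_fract (fract_num w)"
  by (subst (1) fract_num_den) simp

lemma fract_degree_le:
  assumes q: "q \<noteq> 0"
  shows "fract_degree (to_fract p / to_fract q) \<le> max (degree p) (degree q)"
proof -
  define w where "w = to_fract p / to_fract q"
  have eq: "p * fract_den w = fract_num w * q"
    using to_fract_divide_eq_iff[OF q fract_den_nonzero] fract_num_den[of w] by (simp add: w_def)
  then have "fract_num w dvd p * fract_den w" by simp
  then have num_dvd: "fract_num w dvd p"
    using coprime_fract_num_den[of w] by (simp add: coprime_dvd_mult_left_iff)
  have "fract_den w dvd fract_num w * q" using eq by (metis dvd_triv_right)
  then have den_dvd: "fract_den w dvd q"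
    using coprime_fract_num_den[of w] by (simp add: coprime_dvd_mult_right_iff coprime_commute)
  have "degree (fract_num w) \<le> degree p"
  proof (cases "p = 0")
    case False
    then show ?thesis using num_dvd by (rule dvd_imp_degree_le[rotated])
  qed (simp add: w_def fract_num_def)
  moreover have "degree (fract_den w) \<le> degree q" using den_dvd q by (rule dvd_imp_degree_le)
  ultimately show ?thesis unfolding fract_degree_def w_def by linarith
qed

lemma fract_degree_eq_0_iff: "fract_degree w = 0 \<longleftrightarrow> w \<in> range const_fract"
proof
  assume "fract_degree w = 0"
  then have "fract_num w = [:coeff (fract_num w) 0:]" "fract_den w = [:coeff (fract_den w) 0:]"
    unfolding fract_degree_def by (metis max_nat.eq_neutr_iff degree_0_id)+
  then have "w = const_fract (coeff (fract_num w) 0 / coeff (fract_den w) 0)"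
    using fract_num_den[of w] by (metis const_fract_def const_fract.hom_divide)
  then show "w \<in> range const_fract" by blast
next
  assume "w \<in> range const_fract"
  then obtain c where "w = to_fract [:c:] / to_fract 1" by (auto simp: const_fract_def)
  then show "fract_degree w = 0" using fract_degree_le[of 1 "[:c:]"] by simp
qed

section \<open>Non-constant rational functions are transcendental\<close>

lemma eval1_homogenized:
  fixes g h :: "'a::field poly"
  assumes h: "h \<noteq> 0"
  shows "\<exists>N. to_fract h ^ degree a * eval1 a (to_fract g / to_fract h) = to_fract N \<and>
             h dvd N - smult (lead_coeff a) (g ^ degree a)"
proof (induction a)
  case 0
  show ?case by (rule exI[of _ 0]) simp
next
  case (pCons c a)
  show ?case
  proof (cases "a = 0")
    case True
    then show ?thesis by (intro exI[of _ "[:c:]"]) (simp add: const_fract_def)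
  next
    case False
    from pCons.IH obtain N
      where N: "to_fract h ^ degree a * eval1 a (to_fract g / to_fract h) = to_fract N"
      "h dvd N - smult (lead_coeff a) (g ^ degree a)" by blast
    let ?N = "smult c (h ^ Suc (degree a)) + g * N"
    have hu: "to_fract h * (to_fract g / to_fract h) = to_fract g" using h by simp
    have "to_fract h ^ degree (pCons c a) * eval1 (pCons c a) (to_fract g / to_fract h) =
        to_fract h ^ Suc (degree a) * const_fract c +
        (to_fract h * (to_fract g / to_fract h)) *
        (to_fract h ^ degree a * eval1 a (to_fract g / to_fract h))"
      using False by (simp add: eval1_pCons algebra_simps)
    also have "\<dots> = to_fract ?N"
      unfolding hu N(1) by (simp add: algebra_simps)
    finally have "to_fract h ^ degree (pCons c a) * eval1 (pCons c a) (to_fract g / to_fract h) =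
        to_fract ?N" .
    moreover have "?N - smult (lead_coeff (pCons c a)) (g ^ degree (pCons c a)) =
        smult c (h ^ Suc (degree a)) + g * (N - smult (lead_coeff a) (g ^ degree a))"
      using False by (simp add: algebra_simps)
    moreover have
      "h dvd smult c (h ^ Suc (degree a)) + g * (N - smult (lead_coeff a) (g ^ degree a))"
      using N(2) by (intro dvd_add dvd_smult dvd_mult) simp_all
    ultimately show ?thesis by metis
  qed
qed

lemma eval1_to_fract: "eval1 a (to_fract g) = to_fract (pcompose a g)"
  by (induction a) (simp_all add: eval1_pCons pcompose_pCons const_fract_def)

text \<open>Write \<open>u = g/h\<close> in lowest terms. If \<open>a(u) = 0\<close>, clearing denominators shows that \<open>h\<close>
  divides \<open>lc(a) g^deg a\<close>, so \<open>h\<close> is a unit and \<open>u\<close> a non-constant polynomial, which no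
  non-constant \<open>a\<close> annihilates.\<close>
lemma eval1_eq_0_iff:
  fixes u :: "'a::field_gcd poly fract"
  assumes u: "u \<notin> range const_fract"
  shows "eval1 a u = 0 \<longleftrightarrow> a = 0"
proof
  assume eval0: "eval1 a u = 0"
  show "a = 0"
  proof (rule ccontr)
    assume a: "a \<noteq> 0"
    define g h where "g = fract_num u" and "h = fract_den u"
    have h: "h \<noteq> 0" and ugh: "u = to_fract g / to_fract h" and cop: "coprime h g"
      using fract_num_den[of u] coprime_fract_num_den[of u]
      by (auto simp: g_def h_def coprime_commute)
    have "degree a \<noteq> 0"
      using a eval0 by (metis degree_0_id eval1_const const_fract.hom_eq_0_iff pCons_eq_0_iff)
    obtain N where N: "to_fract h ^ degree a * eval1 a u = to_fract N"
      "h dvd N - smult (lead_coeff a) (g ^ degree a)"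
      using eval1_homogenized[OF h, of a g] ugh by blast
    from N eval0 have "h dvd [:lead_coeff a:] * g ^ degree a" by simp
    moreover have "coprime h (g ^ degree a)" using cop by simp
    ultimately have "h dvd [:lead_coeff a:]" by (metis coprime_dvd_mult_left_iff)
    then have "is_unit h" using a by (metis dvd_unit_imp_unit is_unit_triv leading_coeff_0_iff)
    then obtain h0 where h0: "h = [:h0:]" "h0 \<noteq> 0"
      by (metis h degree_0_id is_unit_iff_degree pCons_eq_0_iff)
    define g' where "g' = smult (inverse h0) g"
    have ug': "u = to_fract g'"
      using ugh h0 by (simp add: g'_def inverse_eq_divide const_fract_def [symmetric])
    have "fract_degree u \<noteq> 0" using u fract_degree_eq_0_iff by blast
    then have "degree g' \<noteq> 0" using h0 by (simp add: fract_degree_def g_def h_def g'_def)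
    then have "degree (pcompose a g') \<noteq> 0" using \<open>degree a \<noteq> 0\<close> by (simp add: degree_pcompose)
    then have "pcompose a g' \<noteq> 0" by auto
    then show False using eval0 ug' by (simp add: eval1_to_fract)
  qed
qed simp

section \<open>Substitution of a non-constant rational function for T\<close>

definition fract_subst :: "'a::field_gcd poly fract \<Rightarrow> 'a poly fract \<Rightarrow> 'a poly fract" where
  "fract_subst u w = eval1 (fract_num w) u / eval1 (fract_den w) u"

context
  fixes u :: "'a::field_gcd poly fract"
  assumes u: "u \<notin> range const_fract"
begin

lemma fract_subst_fraction:
  assumes q: "q \<noteq> 0"
  shows "fract_subst u (to_fract p / to_fract q) = eval1 p u / eval1 q u"
proof -
  define w where "w = to_fract p / to_fract q"
  have "p * fract_den w = fract_num w * q"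
    using to_fract_divide_eq_iff[OF q fract_den_nonzero] fract_num_den[of w] by (simp add: w_def)
  then have "eval1 p u * eval1 (fract_den w) u = eval1 (fract_num w) u * eval1 q u"
    by (metis eval1.hom_mult)
  then show ?thesis
    using q fract_den_nonzero[of w] eval1_eq_0_iff[OF u]
    by (simp add: fract_subst_def flip: w_def add: field_simps)
qed

lemma fract_subst_to_fract [simp]: "fract_subst u (to_fract p) = eval1 p u"
  using fract_subst_fraction[of 1 p] by simp

lemma field_hom_fract_subst: "field_hom (fract_subst u)"
proof
  fix x y :: "'a poly fract"
  obtain a b c d where x: "x = to_fract a / to_fract b" and y: "y = to_fract c / to_fract d"
    and b: "b \<noteq> 0" and d: "d \<noteq> 0"
    using fract_num_den fract_den_nonzero by metis
  have nz: "eval1 b u \<noteq> 0" "eval1 d u \<noteq> 0" using b d eval1_eq_0_iff[OF u] by auto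
  have sum: "x + y = to_fract (a * d + c * b) / to_fract (b * d)"
    using b d by (simp add: x y add_frac_eq)
  have "fract_subst u (x + y) = eval1 (a * d + c * b) u / eval1 (b * d) u"
    unfolding sum by (rule fract_subst_fraction) (simp add: b d)
  also have "\<dots> = fract_subst u x + fract_subst u y"
    using b d nz by (simp add: x y fract_subst_fraction add_frac_eq)
  finally show "fract_subst u (x + y) = fract_subst u x + fract_subst u y" .
  have prod: "x * y = to_fract (a * c) / to_fract (b * d)" by (simp add: x y)
  have "fract_subst u (x * y) = eval1 (a * c) u / eval1 (b * d) u"
    unfolding prod by (rule fract_subst_fraction) (simp add: b d)
  then show "fract_subst u (x * y) = fract_subst u x * fract_subst u y"
    using b d by (simp add: x y fract_subst_fraction)
next
  show "fract_subst u 1 = 1" using fract_subst_to_fract[of 1] by simp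
qed

lemma fract_subst_const [simp]: "fract_subst u (const_fract c) = const_fract c"
  by (simp add: const_fract_def)

lemma fract_subst_T_fract [simp]: "fract_subst u T_fract = u"
  by (simp add: T_fract_def eval1_def map_poly_pCons)

end

lemma comm_ring_hom_const_poly: "comm_ring_hom (\<lambda>c::'a::comm_ring_1. [:c:])"
  by unfold_locales (simp_all add: one_pCons)

definition swap_vars :: "'a::comm_ring_1 poly poly \<Rightarrow> 'a poly poly" where
  "swap_vars G = poly (map_poly (map_poly (\<lambda>c. [:c:])) G) [:[:0, 1:]:]"

interpretation swap_vars: comm_ring_hom swap_vars
  unfolding swap_vars_def
  by (rule comm_ring_hom.comm_ring_hom_poly_map_poly,
      rule comm_ring_hom.comm_ring_hom_map_poly[OF comm_ring_hom_const_poly])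

lemma swap_vars_pCons: "swap_vars (pCons a G) = map_poly (\<lambda>c. [:c:]) a + [:[:0, 1:]:] * swap_vars G"
  by (simp add: swap_vars_def map_poly_pCons)

lemma coeff_swap_vars: "coeff (coeff (swap_vars G) j) i = coeff (coeff G i) j"
proof (induction G arbitrary: i)
  case (pCons a G)
  have "[:0, 1:] * q = pCons 0 q" for q :: "'a poly" by simp
  then show ?case
    by (cases i) (simp_all add: swap_vars_pCons coeff_map_poly pCons.IH)
qed (simp add: swap_vars_def)

lemma swap_vars_swap_vars [simp]: "swap_vars (swap_vars G) = G"
  by (intro poly_eqI) (simp add: coeff_swap_vars)

interpretation swap_vars: comm_ring_iso swap_vars
  by unfold_locales (metis bijI' swap_vars_swap_vars)

lemma degree_coeff_le_degree_swap_vars: "degree (coeff G i) \<le> degree (swap_vars G)"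
proof (cases "coeff G i = 0")
  case False
  then have "coeff (coeff (swap_vars G) (degree (coeff G i))) i \<noteq> 0" by (simp add: coeff_swap_vars)
  then show ?thesis by (intro le_degree) auto
qed simp

lemma degree_swap_vars: "degree (swap_vars G) = degX G"
proof (rule antisym)
  have bound: "degree (coeff G i) \<le> degX G" for i
    unfolding degX_def by (cases "i \<le> degree G") (simp_all add: coeff_eq_0)
  show "degree (swap_vars G) \<le> degX G"
  proof (intro degree_le allI impI poly_eqI)
    fix j i assume "degX G < j"
    then show "coeff (coeff (swap_vars G) j) i = coeff 0 i"
      using bound[of i] by (simp add: coeff_swap_vars coeff_eq_0)
  qed
  have "degX G \<in> (\<lambda>i. degree (coeff G i)) ` {..degree G}"
    unfolding degX_def by (rule Max_in) auto
  then show "degX G \<le> degree (swap_vars G)"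
    using degree_coeff_le_degree_swap_vars by auto
qed

lemma swap_vars_const_poly: "swap_vars (map_poly (\<lambda>c. [:c:]) e) = [:e:]"
  by (intro poly_eqI) (simp add: coeff_swap_vars coeff_map_poly coeff_pCons split: nat.split)

lemma degree_swap_vars_eq_0_iff:
  "degree (swap_vars N) = 0 \<longleftrightarrow> N = map_poly (\<lambda>c. [:c:]) (coeff (swap_vars N) 0)"
  by (metis degree_0_id degree_pCons_0 swap_vars.hom_inject swap_vars_const_poly)

lemma eval2_swap_vars: "eval2 (swap_vars G) v u = eval2 G u v"
proof (induction G)
  case (pCons a G)
  have "map_poly (\<lambda>c. eval1 c v) (map_poly (\<lambda>c. [:c:]) a) = map_poly const_fract a"
    by (subst map_poly_map_poly) (simp_all add: o_def)
  then have "eval2 (map_poly (\<lambda>c. [:c:]) a) v u = eval1 a u"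
    by (simp add: eval2_conv_eval1 eval1_def)
  moreover have "eval2 [:[:0, 1:]:] v u = v" by (simp add: eval1_def map_poly_pCons)
  ultimately show ?case by (simp add: swap_vars_pCons pCons.IH eval2_pCons)
qed simp

section \<open>The minimal polynomial of T over k(u)\<close>

lemma fract_divisor_decompose:
  fixes D :: "'a::{factorial_ring_gcd,semiring_gcd_mult_normalize} fract poly"
  assumes "D \<noteq> 0"
  obtains c D0 where "c \<noteq> 0" "D = smult c (map_poly to_fract D0)"
    "\<And>Q. D dvd map_poly to_fract Q \<Longrightarrow> D0 dvd Q"
proof -
  obtain c D0 where D: "D = smult c (map_poly to_fract D0)" and "content D0 = 1"
    using content_decompose_fract[of D] by blast
  moreover have "c \<noteq> 0" using assms D by auto
  ultimately show ?thesis
    using that by (metis fract_poly_dvdD smult_dvd_iff)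
qed

text \<open>For \<open>u = g/h\<close> this is \<open>g(Z) - X h(Z)\<close>, with \<open>Z\<close> the outer variable.\<close>
definition lueroth_poly :: "'a::comm_ring_1 poly \<Rightarrow> 'a poly \<Rightarrow> 'a poly poly" where
  "lueroth_poly g h = map_poly (\<lambda>c. [:c:]) g - smult [:0, 1:] (map_poly (\<lambda>c. [:c:]) h)"

lemma coeff_lueroth_poly: "coeff (lueroth_poly g h) i = [:coeff g i, - coeff h i:]"
  by (simp add: lueroth_poly_def coeff_map_poly)

lemma swap_vars_lueroth_poly: "swap_vars (lueroth_poly g h) = [:g, - h:]"
  by (intro poly_eqI) (simp add: coeff_swap_vars coeff_lueroth_poly coeff_pCons split: nat.split)

lemma degree_lueroth_poly:
  assumes "h \<noteq> 0"
  shows "degree (lueroth_poly g h) = max (degree g) (degree h)"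
proof (rule antisym)
  show "degree (lueroth_poly g h) \<le> max (degree g) (degree h)"
    by (rule degree_le) (auto simp: coeff_lueroth_poly coeff_eq_0)
  have "coeff g (max (degree g) (degree h)) \<noteq> 0 \<or> coeff h (max (degree g) (degree h)) \<noteq> 0"
  proof (cases "degree h \<le> degree g \<and> g \<noteq> 0")
    case False
    then have "max (degree g) (degree h) = degree h" by auto
    then show ?thesis using assms by simp
  qed (use assms in \<open>auto simp: max_def\<close>)
  then show "max (degree g) (degree h) \<le> degree (lueroth_poly g h)"
    by (intro le_degree) (simp add: coeff_lueroth_poly)
qed

lemma irreducible_lueroth_poly:
  fixes g h :: "'a::field_gcd poly"
  assumes cop: "coprime g h" and h: "h \<noteq> 0"
  shows "irreducible (lueroth_poly g h)"
proof -
  have deg: "degree (swap_vars (lueroth_poly g h)) = 1"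
    using h by (simp add: swap_vars_lueroth_poly)
  have unit: "is_unit A" if fac: "[:g, - h:] = swap_vars A * D" and A: "degree (swap_vars A) = 0"
    for A D
  proof -
    obtain e where e: "swap_vars A = [:e:]" using A by (metis degree_0_id)
    have "g = e * coeff D 0" "- h = e * coeff D 1"
      using arg_cong[OF fac, of "\<lambda>p. coeff p 0"] arg_cong[OF fac, of "\<lambda>p. coeff p 1"]
      by (simp_all add: e)
    then have "e dvd g" "e dvd h" by (metis dvd_triv_left, metis dvd_minus_iff dvd_triv_left)
    then have "is_unit e" using cop by (metis coprime_common_divisor)
    then have "is_unit (swap_vars A)" by (simp add: e is_unit_const_poly_iff)
    then show ?thesis using swap_vars.hom_dvd_iff[of A 1] by simp
  qed
  show ?thesis
  proof (rule irreducibleI)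
    show "lueroth_poly g h \<noteq> 0" using deg by auto
    show "\<not> is_unit (lueroth_poly g h)"
      using h swap_vars.hom_dvd_iff[of "lueroth_poly g h" 1]
      by (auto simp: swap_vars_lueroth_poly is_unit_poly_iff)
    fix A B assume "lueroth_poly g h = A * B"
    then have fac: "[:g, - h:] = swap_vars A * swap_vars B"
      by (simp flip: swap_vars_lueroth_poly)
    moreover have "degree [:g, - h:] = 1" using h by simp
    ultimately have "degree (swap_vars A) + degree (swap_vars B) = 1"
      by (metis degree_mult_eq mult_eq_0_iff one_neq_zero degree_0)
    moreover have fac': "[:g, - h:] = swap_vars B * swap_vars A" using fac
      by (simp add: mult.commute)
    ultimately show "is_unit A \<or> is_unit B" using unit[OF fac] unit[OF fac'] by linarith
  qed
qed

lemma map_poly_fract_subst_to_fract: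
  assumes u: "u \<notin> range const_fract"
  shows "map_poly (fract_subst u) (map_poly to_fract Q) = map_poly (\<lambda>c. eval1 c u) Q"
proof -
  interpret field_hom "fract_subst u" by (rule field_hom_fract_subst[OF u])
  show ?thesis by (subst map_poly_map_poly) (simp_all add: o_def u)
qed

lemma eval1_lueroth_poly:
  "map_poly (\<lambda>c. eval1 c u) (lueroth_poly g h) =
    map_poly const_fract g - smult u (map_poly const_fract h)"
proof -
  interpret map_eval1: comm_ring_hom "map_poly (\<lambda>c. eval1 c u)"
    by (rule eval1.comm_ring_hom_map_poly)
  have "map_poly (\<lambda>c. eval1 c u) (map_poly (\<lambda>c. [:c:]) p) = map_poly const_fract p" for p
    by (subst map_poly_map_poly) (simp_all add: o_def)
  then show ?thesis by (simp add: lueroth_poly_def)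
qed

lemma poly_lueroth_poly_T_fract:
  fixes u :: "'a::field_gcd poly fract"
  assumes u: "u \<notin> range const_fract"
  shows "poly (map_poly (fract_subst u)
      (map_poly to_fract (lueroth_poly (fract_num u) (fract_den u)))) T_fract = 0"
  using fract_num_den_mult[of u]
  by (simp add: map_poly_fract_subst_to_fract[OF u] eval1_lueroth_poly flip: eval1_def)

text \<open>The gcd of \<open>C\<close> with the irreducible \<open>g(Z) - X h(Z)\<close> still has the root \<open>T\<close>, so it is
  not constant, and hence \<open>g(Z) - X h(Z)\<close> divides \<open>C\<close>.\<close>
lemma fract_degree_le_degree_annihilator:
  fixes u :: "'a::field_gcd poly fract"
  assumes u: "u \<notin> range const_fract" and C: "C \<noteq> 0"
    and root: "poly (map_poly (fract_subst u) C) T_fract = 0"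
  shows "fract_degree u \<le> degree C"
proof -
  interpret fract_subst: field_hom "fract_subst u" by (rule field_hom_fract_subst[OF u])
  define Q where "Q = lueroth_poly (fract_num u) (fract_den u)"
  have irr: "irreducible Q"
    unfolding Q_def by (rule irreducible_lueroth_poly) (simp_all add: coprime_fract_num_den)
  define D where "D = gcd C (map_poly to_fract Q)"
  have "D \<noteq> 0" using C by (simp add: D_def)
  then obtain c D0 where c: "c \<noteq> 0" and D: "D = smult c (map_poly to_fract D0)"
    and "D0 dvd Q"
    using fract_divisor_decompose by (metis D_def gcd_dvd2)
  have "D dvd C" by (simp add: D_def)
  obtain s t where "s * C + t * map_poly to_fract Q = D"
    using bezout_coefficients_fst_snd unfolding D_def by blast
  then have "poly (map_poly (fract_subst u) D) T_fract =
      poly (map_poly (fract_subst u) (s * C + t * map_poly to_fract Q)) T_fract"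
    by simp
  also have "\<dots> = 0"
    using root poly_lueroth_poly_T_fract[OF u] by (simp add: Q_def poly_mult)
  finally have D_root: "poly (map_poly (fract_subst u) D) T_fract = 0" .
  from irreducibleD'[OF irr \<open>D0 dvd Q\<close>] show ?thesis
  proof
    assume "is_unit D0"
    then obtain e where "D0 = [:e:]" "e \<noteq> 0" by (metis is_unit_poly_iff not_is_unit_0)
    then have "D = [:c * to_fract e:]" "c * to_fract e \<noteq> 0"
      using c by (simp_all add: D map_poly_pCons)
    then show ?thesis using D_root by (simp add: map_poly_pCons)
  next
    assume "Q dvd D0"
    then have "degree Q \<le> degree D"
      using c \<open>D \<noteq> 0\<close> dvd_imp_degree_le[of Q D0] by (auto simp: D degree_map_poly map_poly_eq_0_iff)
    also have "degree D \<le> degree C" using C \<open>D dvd C\<close> by (rule dvd_imp_degree_le[rotated])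
    finally show ?thesis by (simp add: Q_def degree_lueroth_poly fract_degree_def)
  qed
qed

section \<open>The degree of T over k(u, v)\<close>

lemma T_fract_power_inject: "(T_fract :: 'a::field poly fract) ^ i = T_fract ^ j \<longleftrightarrow> i = j"
proof
  assume "(T_fract :: 'a poly fract) ^ i = T_fract ^ j"
  then have "([:0, 1::'a:] ^ i) = [:0, 1:] ^ j" by (simp add: T_fract_def flip: to_fract.hom_power)
  then have "degree ([:0, 1::'a:] ^ i) = degree ([:0, 1::'a:] ^ j)" by simp
  then show "i = j" by (simp add: degree_power_eq)
qed simp

context
  fixes u :: "'a::field_gcd poly fract"
  assumes u: "u \<notin> range const_fract"
begin

interpretation fract_subst: field_hom "fract_subst u" by (rule field_hom_fract_subst[OF u])

text \<open>\<open>k(T)\<close> as a vector space over \<open>k(u)\<close>, the scalars acting through the isomorphism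
  \<open>k(T) \<cong> k(u)\<close> given by substitution of \<open>u\<close>.\<close>
interpretation over_u: vector_space "\<lambda>c w. fract_subst u c * w"
  by unfold_locales (simp_all add: algebra_simps)

lemma poly_in_span_powers:
  assumes P: "P \<noteq> 0" and root: "poly (map_poly (fract_subst u) P) v = 0"
  shows "poly (map_poly (fract_subst u) p) v \<in> over_u.span ((\<lambda>i. v ^ i) ` {..<degree P})"
proof -
  have "map_poly (fract_subst u) p = map_poly (fract_subst u) (p div P) * map_poly (fract_subst u) P
      + map_poly (fract_subst u) (p mod P)"
    by (metis div_mult_mod_eq fract_subst.map_poly_add fract_subst.map_poly_mult)
  then have reduce:
    "poly (map_poly (fract_subst u) p) v = poly (map_poly (fract_subst u) (p mod P)) v"
    by (simp add: root poly_mult)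
  show ?thesis
  proof (cases "p mod P = 0")
    case False
    with P have deg: "degree (p mod P) < degree P" by (rule degree_mod_less')
    have "poly (map_poly (fract_subst u) (p mod P)) v =
        (\<Sum>i\<le>degree (p mod P). fract_subst u (coeff (p mod P) i) * v ^ i)"
      by (simp add: poly_altdef coeff_map_poly degree_map_poly)
    also have "\<dots> \<in> over_u.span ((\<lambda>i. v ^ i) ` {..<degree P})"
      using deg by (intro over_u.span_sum over_u.span_scale over_u.span_base) auto
    finally show ?thesis by (simp only: reduce)
  qed (simp add: reduce over_u.span_zero)
qed

lemma independent_T_fract_powers:
  assumes c: "c \<noteq> 0"
  shows "over_u.independent ((\<lambda>i. T_fract ^ i * c) ` {..<fract_degree u})"
proof (rule over_u.independent_if_scalars_zero)
  define n where "n = fract_degree u"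
  have inj: "inj_on (\<lambda>i. T_fract ^ i * c) {..<n}"
    using c by (intro inj_onI) (simp add: T_fract_power_inject)
  show "finite ((\<lambda>i. T_fract ^ i * c) ` {..<fract_degree u})" by simp
  fix f x
  assume sum0: "(\<Sum>x\<in>(\<lambda>i. T_fract ^ i * c) ` {..<fract_degree u}. fract_subst u (f x) * x) = 0"
    and x: "x \<in> (\<lambda>i. T_fract ^ i * c) ` {..<fract_degree u}"
  define C where "C = (\<Sum>i<n. monom (f (T_fract ^ i * c)) i)"
  have "map_poly (fract_subst u) C = (\<Sum>i<n. monom (fract_subst u (f (T_fract ^ i * c))) i)"
    by (intro poly_eqI) (simp add: C_def coeff_map_poly coeff_sum fract_subst.hom_sum)
  then have "poly (map_poly (fract_subst u) C) T_fract * c =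
      (\<Sum>i<n. fract_subst u (f (T_fract ^ i * c)) * (T_fract ^ i * c))"
    by (simp add: poly_sum poly_monom sum_distrib_right mult.assoc)
  also have "\<dots> = 0" using sum0 by (simp add: sum.reindex[OF inj[unfolded n_def]] n_def)
  finally have root: "poly (map_poly (fract_subst u) C) T_fract = 0" using c by simp
  have "degree C \<le> n - 1"
    unfolding C_def by (intro degree_sum_le) (auto intro: order.trans[OF degree_monom_le])
  have "C = 0"
  proof (rule ccontr)
    assume "C \<noteq> 0"
    then have "n \<le> degree C" using fract_degree_le_degree_annihilator[OF u _ root]
      by (simp add: n_def)
    then have "n = 0" using \<open>degree C \<le> n - 1\<close> by linarith
    then show False using \<open>C \<noteq> 0\<close> by (simp add: C_def)
  qed
  moreover obtain i where "i < n" "x = T_fract ^ i * c" using x by (auto simp: n_def)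
  moreover have "coeff C i = f (T_fract ^ i * c)" if "i < n" for i
    using that by (simp add: C_def coeff_sum)
  ultimately show "f x = 0" by simp
qed

text \<open>\<open>k(u)[v]\<close> is spanned by the powers \<open>v^i\<close>, \<open>i < deg P\<close>, and contains the \<open>k(u)\<close>-independent
  elements \<open>T^i H(u,v)^(n-1) = G(u,v)^i H(u,v)^(n-1-i)\<close>, \<open>i < n = deg u\<close>.\<close>
lemma fract_degree_le_degree_if_generates_T:
  assumes P: "P \<noteq> 0" and root: "eval2 P u v = 0"
    and H: "eval2 H u v \<noteq> 0" and T_fract: "T_fract = eval2 G u v / eval2 H u v"
  shows "fract_degree u \<le> degree P"
proof -
  define n where "n = fract_degree u"
  have eval2_conv: "eval2 X u v = poly (map_poly (fract_subst u) (map_poly to_fract X)) v" for X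
    by (simp add: map_poly_fract_subst_to_fract[OF u] eval2_conv_eval1)
  have span: "eval2 X u v \<in> over_u.span ((\<lambda>i. v ^ i) ` {..<degree P})" for X
    using poly_in_span_powers[of "map_poly to_fract P" v "map_poly to_fract X"] P root
    by (simp add: eval2_conv degree_map_poly map_poly_eq_0_iff)
  define S where "S = (\<lambda>i. T_fract ^ i * eval2 H u v ^ (n - 1)) ` {..<n}"
  have "S \<subseteq> over_u.span ((\<lambda>i. v ^ i) ` {..<degree P})"
  proof
    fix x assume "x \<in> S"
    then obtain i where i: "i < n" and x: "x = T_fract ^ i * eval2 H u v ^ (n - 1)"
      by (auto simp: S_def)
    have "eval2 H u v ^ (n - 1) = eval2 H u v ^ i * eval2 H u v ^ (n - 1 - i)"
      using i by (simp flip: power_add)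
    then have "x = eval2 G u v ^ i * eval2 H u v ^ (n - 1 - i)"
      using H by (simp add: x T_fract power_divide)
    also have "\<dots> = eval2 (G ^ i * H ^ (n - 1 - i)) u v" by simp
    finally show "x \<in> over_u.span ((\<lambda>i. v ^ i) ` {..<degree P})"
      using span[of "G ^ i * H ^ (n - 1 - i)"] by simp
  qed
  moreover have "over_u.independent S"
    unfolding S_def n_def using H by (intro independent_T_fract_powers) simp
  ultimately have "card S \<le> card ((\<lambda>i. v ^ i) ` {..<degree P})"
    using over_u.independent_span_bound[of "(\<lambda>i. v ^ i) ` {..<degree P}" S] by simp
  also have "\<dots> \<le> degree P" using card_image_le[of "{..<degree P}"] by simp
  finally show ?thesis
    using H by (simp add: S_def card_image inj_on_def T_fract_power_inject n_def)
qed

end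

section \<open>The kernel of evaluation at a non-constant zero\<close>

lemma fract_poly_clear_denominators:
  fixes p :: "'a::field_gcd poly fract poly"
  obtains d p' where "d \<noteq> 0" "smult (to_fract d) p = map_poly to_fract p'"
proof -
  obtain c p1 where p: "p = smult c (map_poly to_fract p1)"
    using content_decompose_fract[of p] by blast
  have "smult (to_fract (fract_den c)) p = smult (to_fract (fract_num c)) (map_poly to_fract p1)"
    by (simp add: p mult.commute fract_num_den_mult)
  also have "\<dots> = map_poly to_fract (smult (fract_num c) p1)"
    by (simp add: to_fract.map_poly_smult)
  finally show ?thesis using that fract_den_nonzero by blast
qed

lemma const_combination_if_not_dvd:
  fixes F G :: "'a::field_gcd poly poly"
  assumes irr: "irreducible F" and "\<not> F dvd G"
  obtains d s t where "d \<noteq> 0" "[:d:] = s * F + t * G"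
proof -
  define D where "D = gcd (map_poly to_fract F) (map_poly to_fract G)"
  have "D \<noteq> 0" using irr by (auto simp: D_def map_poly_eq_0_iff)
  then obtain c D0 where c: "c \<noteq> 0" and D: "D = smult c (map_poly to_fract D0)"
    and "D0 dvd F" "D0 dvd G"
    using fract_divisor_decompose by (metis D_def gcd_dvd1 gcd_dvd2)
  then have "is_unit D0" using irreducibleD'[OF irr] \<open>\<not> F dvd G\<close> dvd_trans by blast
  then obtain e where e: "D0 = [:e:]" "e \<noteq> 0" by (metis is_unit_poly_iff not_is_unit_0)
  define k where "k = c * to_fract e"
  have D_const: "D = [:k:]" "k \<noteq> 0"
    using c e by (simp_all add: D k_def map_poly_pCons)
  obtain s t where "s * map_poly to_fract F + t * map_poly to_fract G = D"
    using bezout_coefficients_fst_snd unfolding D_def by blast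
  then have unit_comb: "smult (inverse k) s * map_poly to_fract F
      + smult (inverse k) t * map_poly to_fract G = 1"
    using D_const by (simp flip: smult_add_right add: one_pCons)
  obtain d1 s1 where s1: "d1 \<noteq> 0" "smult (to_fract d1) (smult (inverse k) s) = map_poly to_fract s1"
    using fract_poly_clear_denominators by blast
  obtain d2 t1 where t1: "d2 \<noteq> 0" "smult (to_fract d2) (smult (inverse k) t) = map_poly to_fract t1"
    using fract_poly_clear_denominators by blast
  have "map_poly to_fract [:d1 * d2:] = smult (to_fract (d1 * d2)) 1"
    by (simp add: map_poly_pCons)
  also have "\<dots> = smult (to_fract d2) (map_poly to_fract s1) * map_poly to_fract F
      + smult (to_fract d1) (map_poly to_fract t1) * map_poly to_fract G"
    by (simp flip: unit_comb s1(2) t1(2) add: algebra_simps smult_add_right)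
  also have "\<dots> = map_poly to_fract (smult d2 s1 * F + smult d1 t1 * G)"
    by simp
  finally show ?thesis using that s1(1) t1(1) by (metis fract_poly_eq_iff mult_eq_0_iff)
qed

lemma eval2_eq_0_imp_dvd:
  fixes F :: "'a::field_gcd poly poly"
  assumes irr: "irreducible F" and u: "u \<notin> range const_fract"
    and F: "eval2 F u v = 0" and G: "eval2 G u v = 0"
  shows "F dvd G"
proof (rule ccontr)
  assume "\<not> F dvd G"
  then obtain d s t where "d \<noteq> 0" "[:d:] = s * F + t * G"
    using const_combination_if_not_dvd[OF irr] by blast
  then have "eval1 d u = 0" using F G
    by (metis eval2.hom_add eval2.hom_mult eval2_const mult_zero_right add_0)
  then show False using eval1_eq_0_iff[OF u] \<open>d \<noteq> 0\<close> by blast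
qed

lemma eval2_eq_0_iff_dvd:
  fixes F :: "'a::field_gcd poly poly"
  assumes irr: "irreducible F" and nc: "\<not> (u \<in> range const_fract \<and> v \<in> range const_fract)"
    and F: "eval2 F u v = 0"
  shows "eval2 G u v = 0 \<longleftrightarrow> F dvd G"
proof
  assume G: "eval2 G u v = 0"
  show "F dvd G"
  proof (cases "u \<in> range const_fract")
    case False
    show ?thesis using eval2_eq_0_imp_dvd[OF irr False F G] .
  next
    case True
    then have "swap_vars F dvd swap_vars G"
      using nc F G
      by (intro eval2_eq_0_imp_dvd[where u = v and v = u]) (simp_all add: irr eval2_swap_vars)
    then show ?thesis by simp
  qed
qed (use F in \<open>auto elim: dvdE\<close>)

definition gen_field :: "'a::field poly fract \<Rightarrow> 'a poly fract \<Rightarrow> 'a poly fract set" where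
  "gen_field u v = {eval2 G u v / eval2 H u v | G H. eval2 H u v \<noteq> 0}"

lemma gen_field_iff:
  "w \<in> gen_field u v \<longleftrightarrow> (\<exists>G H. eval2 H u v \<noteq> 0 \<and> w = eval2 G u v / eval2 H u v)"
  by (auto simp: gen_field_def)

context
  fixes u v :: "'a::field poly fract"
begin

lemma eval2_in_gen_field: "eval2 G u v \<in> gen_field u v"
  unfolding gen_field_iff by (rule exI[of _ G], rule exI[of _ 1]) simp

lemma const_in_gen_field: "const_fract c \<in> gen_field u v"
  using eval2_in_gen_field[of "[:[:c:]:]"] by simp

lemma fst_in_gen_field: "u \<in> gen_field u v"
  using eval2_in_gen_field[of "[:[:0, 1:]:]"] by simp

lemma snd_in_gen_field: "v \<in> gen_field u v"
  using eval2_in_gen_field[of "[:0, 1:]"] by (simp add: eval2_pCons)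

lemma zero_in_gen_field: "0 \<in> gen_field u v"
  using const_in_gen_field[of 0] by simp

lemma gen_field_add:
  assumes "x \<in> gen_field u v" "y \<in> gen_field u v"
  shows "x + y \<in> gen_field u v"
proof -
  obtain G1 H1 G2 H2 where H: "eval2 H1 u v \<noteq> 0" "eval2 H2 u v \<noteq> 0"
    and "x = eval2 G1 u v / eval2 H1 u v" "y = eval2 G2 u v / eval2 H2 u v"
    using assms unfolding gen_field_iff by blast
  then have "x + y = eval2 (G1 * H2 + G2 * H1) u v / eval2 (H1 * H2) u v"
    by (simp add: add_frac_eq)
  then show ?thesis using H unfolding gen_field_iff by (metis eval2.hom_mult mult_eq_0_iff)
qed

lemma gen_field_mult:
  assumes "x \<in> gen_field u v" "y \<in> gen_field u v"
  shows "x * y \<in> gen_field u v"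
proof -
  obtain G1 H1 G2 H2 where H: "eval2 H1 u v \<noteq> 0" "eval2 H2 u v \<noteq> 0"
    and "x = eval2 G1 u v / eval2 H1 u v" "y = eval2 G2 u v / eval2 H2 u v"
    using assms unfolding gen_field_iff by blast
  then have "x * y = eval2 (G1 * G2) u v / eval2 (H1 * H2) u v" by simp
  then show ?thesis using H unfolding gen_field_iff by (metis eval2.hom_mult mult_eq_0_iff)
qed

lemma gen_field_inverse:
  assumes "x \<in> gen_field u v"
  shows "inverse x \<in> gen_field u v"
proof (cases "x = 0")
  case False
  obtain G H where "eval2 H u v \<noteq> 0" "x = eval2 G u v / eval2 H u v"
    using assms unfolding gen_field_iff by blast
  with False show ?thesis unfolding gen_field_iff by (intro exI[of _ H] exI[of _ G]) simp
qed (simp add: zero_in_gen_field)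

lemma gen_field_uminus: "x \<in> gen_field u v \<Longrightarrow> - x \<in> gen_field u v"
  using gen_field_mult[OF const_in_gen_field[of "- 1"]] by simp

lemma gen_field_diff: "x \<in> gen_field u v \<Longrightarrow> y \<in> gen_field u v \<Longrightarrow> x - y \<in> gen_field u v"
  using gen_field_add[of x "- y"] gen_field_uminus[of y] by simp

lemma gen_field_divide: "x \<in> gen_field u v \<Longrightarrow> y \<in> gen_field u v \<Longrightarrow> x / y \<in> gen_field u v"
  by (simp add: divide_inverse gen_field_mult gen_field_inverse)

lemma gen_field_sum: "(\<And>i. i \<in> A \<Longrightarrow> f i \<in> gen_field u v) \<Longrightarrow> sum f A \<in> gen_field u v"
  by (induction A rule: infinite_finite_induct)
    (auto intro: gen_field_add simp: zero_in_gen_field)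

lemma gen_field_eval1: "t \<in> gen_field u v \<Longrightarrow> eval1 a t \<in> gen_field u v"
  by (induction a) (simp_all add: eval1_pCons gen_field_add gen_field_mult const_in_gen_field
      zero_in_gen_field)

end

lemma gen_field_fract_subst:
  fixes u v :: "'a::field_gcd poly fract"
  shows "t \<in> gen_field u v \<Longrightarrow> fract_subst t x \<in> gen_field u v"
  unfolding fract_subst_def by (intro gen_field_divide gen_field_eval1)

lemma cancel_leading_term:
  fixes p q :: "'a::field poly"
  assumes "q \<noteq> 0" "p \<noteq> 0" "degree q \<le> degree p"
  defines "m \<equiv> monom (lead_coeff p / lead_coeff q) (degree p - degree q)"
  shows "p - m * q = 0 \<or> degree (p - m * q) < degree p"
proof -
  have "lead_coeff p / lead_coeff q \<noteq> 0" using assms by simp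
  then have dm: "degree (m * q) = degree p" and lc: "lead_coeff (m * q) = lead_coeff p"
    using assms unfolding lead_coeff_mult by (simp_all add: m_def degree_mult_eq degree_monom_eq)
  have "degree (p - m * q) \<le> degree p" using dm by (intro degree_diff_le) simp_all
  moreover have "coeff (p - m * q) (degree p) = 0" using dm lc by simp
  ultimately show ?thesis by (metis le_neq_implies_less leading_coeff_0_iff)
qed

definition gen_field_poly :: "'a::field poly fract \<Rightarrow> 'a poly fract \<Rightarrow> 'a poly fract poly set" where
  "gen_field_poly u v = {p. \<forall>i. coeff p i \<in> gen_field u v}"

context
  fixes u v :: "'a::field poly fract"
begin

lemma zero_in_gen_field_poly: "0 \<in> gen_field_poly u v"
  by (simp add: gen_field_poly_def zero_in_gen_field)

lemma gen_field_poly_add: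
  "p \<in> gen_field_poly u v \<Longrightarrow> q \<in> gen_field_poly u v \<Longrightarrow> p + q \<in> gen_field_poly u v"
  by (simp add: gen_field_poly_def gen_field_add)

lemma gen_field_poly_diff:
  "p \<in> gen_field_poly u v \<Longrightarrow> q \<in> gen_field_poly u v \<Longrightarrow> p - q \<in> gen_field_poly u v"
  by (simp add: gen_field_poly_def gen_field_diff)

lemma gen_field_poly_smult:
  "c \<in> gen_field u v \<Longrightarrow> p \<in> gen_field_poly u v \<Longrightarrow> smult c p \<in> gen_field_poly u v"
  by (simp add: gen_field_poly_def gen_field_mult)

lemma gen_field_poly_monom: "c \<in> gen_field u v \<Longrightarrow> monom c n \<in> gen_field_poly u v"
  by (simp add: gen_field_poly_def coeff_monom zero_in_gen_field)

lemma gen_field_poly_mult: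
  "p \<in> gen_field_poly u v \<Longrightarrow> q \<in> gen_field_poly u v \<Longrightarrow> p * q \<in> gen_field_poly u v"
  by (auto simp: gen_field_poly_def coeff_mult intro!: gen_field_sum gen_field_mult)

lemma gen_field_poly_division:
  assumes "p \<in> gen_field_poly u v" "q \<in> gen_field_poly u v" "q \<noteq> 0"
  shows "\<exists>s r. s \<in> gen_field_poly u v \<and> r \<in> gen_field_poly u v \<and> p = s * q + r \<and>
    (r = 0 \<or> degree r < degree q)"
  using assms(1)
proof (induction "degree p" arbitrary: p rule: less_induct)
  case less
  show ?case
  proof (cases "p = 0 \<or> degree p < degree q")
    case True
    then show ?thesis using less.prems zero_in_gen_field_poly
      by (intro exI[of _ 0] exI[of _ p]) auto
  next
    case False
    define m where "m = monom (lead_coeff p / lead_coeff q) (degree p - degree q)"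
    have m: "m \<in> gen_field_poly u v"
      using less.prems assms(2) unfolding m_def gen_field_poly_def
      by (intro gen_field_poly_monom[unfolded gen_field_poly_def] gen_field_divide) auto
    have "p - m * q = 0 \<or> degree (p - m * q) < degree p"
      using False assms(3) unfolding m_def by (intro cancel_leading_term) auto
    then show ?thesis
    proof
      assume "degree (p - m * q) < degree p"
      moreover have "p - m * q \<in> gen_field_poly u v"
        using less.prems m assms(2) by (intro gen_field_poly_diff gen_field_poly_mult)
      ultimately obtain s r where "s \<in> gen_field_poly u v" "r \<in> gen_field_poly u v"
        "p - m * q = s * q + r" "r = 0 \<or> degree r < degree q"
        using less.hyps by blast
      then show ?thesis using m
        by (intro exI[of _ "s + m"] exI[of _ r])
          (auto intro: gen_field_poly_add simp: algebra_simps)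
    next
      assume "p - m * q = 0"
      then show ?thesis using m zero_in_gen_field_poly by (intro exI[of _ m] exI[of _ 0]) auto
    qed
  qed
qed

end

section \<open>Lueroth's theorem for k(u, v)\<close>

lemma root_T_fract_nonconstant_coeff:
  fixes \<mu> :: "'a::field poly fract poly"
  assumes "\<mu> \<noteq> 0" and "poly \<mu> T_fract = 0"
  shows "\<exists>j. coeff \<mu> j \<notin> range const_fract"
proof (rule ccontr)
  assume "\<not> ?thesis"
  then have const: "coeff \<mu> j \<in> range const_fract" for j by blast
  define p where "p = map_poly (inv const_fract) \<mu>"
  have "inj const_fract" by (rule injI) simp
  then have "inv const_fract 0 = 0" using inv_f_f[of const_fract 0] by simp
  then have "coeff p j = inv const_fract (coeff \<mu> j)" for j
    unfolding p_def by (rule coeff_map_poly)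
  then have \<mu>: "\<mu> = map_poly const_fract p"
    by (intro poly_eqI) (simp add: coeff_map_poly f_inv_into_f[OF const])
  then have "p \<noteq> 0" using assms(1) by auto
  moreover have "poly \<mu> T_fract = to_fract p" unfolding \<mu> by (metis eval1_T_fract eval1_def)
  ultimately show False using assms(2) by simp
qed

text \<open>For \<open>\<theta> = g/h\<close> this is \<open>h(T) g(Z) - g(T) h(Z) = h(T) (g(Z) - \<theta> h(Z))\<close>.\<close>
definition cleared_lueroth_poly :: "'a::comm_ring_1 poly \<Rightarrow> 'a poly \<Rightarrow> 'a poly poly" where
  "cleared_lueroth_poly g h = smult h (map_poly (\<lambda>c. [:c:]) g) - smult g (map_poly (\<lambda>c. [:c:]) h)"

lemma coeff_cleared_lueroth_poly:
  "coeff (cleared_lueroth_poly g h) i = smult (coeff g i) h - smult (coeff h i) g"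
  by (simp add: cleared_lueroth_poly_def coeff_map_poly mult.commute)

lemma coeff_swap_vars_cleared_lueroth_poly:
  "coeff (swap_vars (cleared_lueroth_poly g h)) j = smult (coeff h j) g - smult (coeff g j) h"
  by (intro poly_eqI) (simp add: coeff_swap_vars coeff_cleared_lueroth_poly mult.commute)

lemma fract_poly_cleared_lueroth_poly:
  "map_poly to_fract (cleared_lueroth_poly g h) =
    smult (to_fract h)
      (map_poly const_fract g - smult (to_fract g / to_fract h) (map_poly const_fract h))"
  by (cases "h = 0")
    (auto intro!: poly_eqI
      simp: coeff_map_poly coeff_cleared_lueroth_poly const_fract_def algebra_simps)

lemma proportional_imp_const_fraction:
  fixes g h :: "'a::field poly"
  assumes "h \<noteq> 0" "b \<noteq> 0" "smult b g = smult a h"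
  shows "to_fract g / to_fract h = const_fract (a / b)"
proof -
  have "g = smult (a / b) h"
    using assms(2,3)
    by (metis divide_inverse_commute smult_smult left_inverse smult_1_left mult.commute)
  then show ?thesis using assms(1) by simp
qed

lemma nonconstant_fraction_coeffs:
  fixes g h :: "'a::field poly"
  assumes h: "h \<noteq> 0" and nc: "to_fract g / to_fract h \<notin> range const_fract"
  obtains i j where "coeff g i * coeff h j \<noteq> coeff g j * coeff h i"
proof -
  have "smult (lead_coeff h) g \<noteq> smult (coeff g (degree h)) h"
    using proportional_imp_const_fraction[OF h] h nc by (metis leading_coeff_0_iff rangeI)
  then obtain i where "lead_coeff h * coeff g i \<noteq> coeff g (degree h) * coeff h i"
    by (metis coeff_smult poly_eqI)
  then show ?thesis using that[of i "degree h"] by (simp add: mult.commute)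
qed

lemma degree_cleared_lueroth_poly:
  fixes g h :: "'a::field poly"
  assumes h: "h \<noteq> 0" and nc: "to_fract g / to_fract h \<notin> range const_fract"
  shows "degree (cleared_lueroth_poly g h) = max (degree g) (degree h)"
proof (rule antisym)
  let ?r = "max (degree g) (degree h)"
  show "degree (cleared_lueroth_poly g h) \<le> ?r"
    by (rule degree_le) (auto simp: coeff_cleared_lueroth_poly coeff_eq_0)
  have "coeff (cleared_lueroth_poly g h) ?r \<noteq> 0"
  proof
    assume "coeff (cleared_lueroth_poly g h) ?r = 0"
    then have eq: "smult (coeff h ?r) g = smult (coeff g ?r) h"
      by (simp add: coeff_cleared_lueroth_poly)
    have "g \<noteq> 0" using nc by (auto simp: const_fract_def)
    then have "coeff g ?r \<noteq> 0 \<or> coeff h ?r \<noteq> 0"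
      using h by (cases "degree h \<le> degree g") (auto simp: max_def)
    show False
    proof (cases "coeff h ?r = 0")
      case False
      then show False using nc proportional_imp_const_fraction[OF h False eq] by (metis rangeI)
    qed (use eq h \<open>coeff g ?r \<noteq> 0 \<or> coeff h ?r \<noteq> 0\<close> in simp)
  qed
  then show "?r \<le> degree (cleared_lueroth_poly g h)" by (rule le_degree)
qed

text \<open>A common divisor of the coefficients \<open>h\<^sub>j g(Z) - g\<^sub>j h(Z)\<close> of the powers \<open>T^j\<close> in
  \<open>h(T) g(Z) - g(T) h(Z)\<close> divides two independent linear combinations of \<open>g\<close> and \<open>h\<close>, hence
  \<open>g\<close> and \<open>h\<close> themselves.\<close>
lemma unit_if_dvd_coeffs_cleared_lueroth_poly:
  fixes g h n :: "'a::field_gcd poly"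
  assumes cop: "coprime g h" and h: "h \<noteq> 0" and nc: "to_fract g / to_fract h \<notin> range const_fract"
    and dvd: "\<And>j. n dvd coeff (swap_vars (cleared_lueroth_poly g h)) j"
  shows "is_unit n"
proof -
  obtain i j where ij: "coeff g i * coeff h j \<noteq> coeff g j * coeff h i"
    using nonconstant_fraction_coeffs[OF h nc] by blast
  define \<delta> where "\<delta> = coeff g i * coeff h j - coeff g j * coeff h i"
  have \<delta>: "\<delta> \<noteq> 0" using ij by (simp add: \<delta>_def)
  have dvd_ij: "n dvd smult (coeff h i) g - smult (coeff g i) h"
    "n dvd smult (coeff h j) g - smult (coeff g j) h"
    using dvd[of i] dvd[of j] by (simp_all add: coeff_swap_vars_cleared_lueroth_poly)
  have "smult \<delta> h = smult (coeff h i) (smult (coeff h j) g - smult (coeff g j) h)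
      - smult (coeff h j) (smult (coeff h i) g - smult (coeff g i) h)"
    by (simp add: \<delta>_def algebra_simps smult_diff_right smult_diff_left)
  then have "n dvd smult \<delta> h" using dvd_ij by (metis dvd_diff dvd_smult)
  moreover have "smult \<delta> g = smult (coeff g i) (smult (coeff h j) g - smult (coeff g j) h)
      - smult (coeff g j) (smult (coeff h i) g - smult (coeff g i) h)"
    by (simp add: \<delta>_def algebra_simps smult_diff_right smult_diff_left)
  then have "n dvd smult \<delta> g" using dvd_ij by (metis dvd_diff dvd_smult)
  ultimately show ?thesis using \<delta> cop by (metis coprime_common_divisor dvd_smult_cancel)
qed

lemma fract_degree_coeff_monic_le:
  fixes M :: "'a::field_gcd poly poly"
  assumes monic: "lead_coeff \<mu> = 1" and \<mu>: "\<mu> = smult c (map_poly to_fract M)"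
  shows "fract_degree (coeff \<mu> j) \<le> degree (swap_vars M)"
proof -
  have "c \<noteq> 0" using monic \<mu> by auto
  then have "1 = c * to_fract (lead_coeff M)"
    using monic \<mu> by (simp add: coeff_map_poly degree_map_poly)
  then have "c = inverse (to_fract (lead_coeff M))" by (metis inverse_unique mult.commute)
  then have "coeff \<mu> j = to_fract (coeff M j) / to_fract (lead_coeff M)"
    using \<mu> by (simp add: coeff_map_poly divide_inverse mult.commute)
  moreover have "lead_coeff M \<noteq> 0" using \<open>1 = _\<close> by auto
  ultimately have "fract_degree (coeff \<mu> j) \<le> max (degree (coeff M j)) (degree (lead_coeff M))"
    by (metis fract_degree_le)
  also have "\<dots> \<le> degree (swap_vars M)"
    by (simp add: degree_coeff_le_degree_swap_vars)
  finally show ?thesis .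
qed

lemma degree_swap_vars_cleared_lueroth_poly:
  "degree (swap_vars (cleared_lueroth_poly g h)) \<le> max (degree g) (degree h)"
  by (rule degree_le) (auto simp: coeff_swap_vars_cleared_lueroth_poly coeff_eq_0)

lemma degree_factor_cleared_lueroth_poly:
  fixes g h :: "'a::field_gcd poly"
  assumes cop: "coprime g h" and h: "h \<noteq> 0" and nc: "to_fract g / to_fract h \<notin> range const_fract"
    and fac: "cleared_lueroth_poly g h = M * N" and N: "degree (swap_vars N) = 0"
  shows "degree M = degree (cleared_lueroth_poly g h)"
proof -
  define n where "n = coeff (swap_vars N) 0"
  have swap_N: "swap_vars N = [:n:]" and N_eq: "N = map_poly (\<lambda>c. [:c:]) n"
    using N by (simp_all add: n_def degree_swap_vars_eq_0_iff degree_0_id)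
  have "is_unit n"
  proof (rule unit_if_dvd_coeffs_cleared_lueroth_poly[OF cop h nc])
    fix j
    have "swap_vars (cleared_lueroth_poly g h) = swap_vars M * [:n:]" using fac swap_N by simp
    then show "n dvd coeff (swap_vars (cleared_lueroth_poly g h)) j" by simp
  qed
  then obtain c where "n = [:c:]" "c \<noteq> 0" by (metis is_unit_poly_iff not_is_unit_0)
  then show ?thesis using fac N_eq by (simp add: map_poly_pCons)
qed

text \<open>The heart of Lueroth's theorem: the cleared form of a monic factor of
  \<open>g(Z) - \<theta> h(Z)\<close> over \<open>k(T)\<close> divides \<open>h(T) g(Z) - g(T) h(Z)\<close> in \<open>k[T][Z]\<close>; if one of its
  coefficients has degree at least \<open>deg \<theta>\<close>, the cofactor is constant in \<open>T\<close>, hence a unit.\<close>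
lemma degree_monic_factor_lueroth_poly:
  fixes \<theta> :: "'a::field_gcd poly fract"
  assumes \<theta>: "\<theta> \<notin> range const_fract" and monic: "lead_coeff \<mu> = 1"
    and dvd: "\<mu> dvd
      map_poly const_fract (fract_num \<theta>) - smult \<theta> (map_poly const_fract (fract_den \<theta>))"
    and coeff: "fract_degree \<theta> \<le> fract_degree (coeff \<mu> j)"
  shows "degree \<mu> = fract_degree \<theta>"
proof -
  define g h where "g = fract_num \<theta>" and "h = fract_den \<theta>"
  have h: "h \<noteq> 0" and cop: "coprime g h" and \<theta>_eq: "\<theta> = to_fract g / to_fract h"
    using fract_num_den[of \<theta>] coprime_fract_num_den[of \<theta>] by (simp_all add: g_def h_def)
  have nc: "to_fract g / to_fract h \<notin> range const_fract" using \<theta> \<theta>_eq by simp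
  define Q where "Q = cleared_lueroth_poly g h"
  have deg_Q: "degree Q = fract_degree \<theta>"
    using degree_cleared_lueroth_poly[OF h nc] by (simp add: Q_def fract_degree_def g_def h_def)
  have deg_swap_Q: "degree (swap_vars Q) \<le> fract_degree \<theta>"
    using degree_swap_vars_cleared_lueroth_poly by (simp add: Q_def fract_degree_def g_def h_def)
  have "\<mu> \<noteq> 0" using monic by auto
  then obtain c M where c: "c \<noteq> 0" and \<mu>: "\<mu> = smult c (map_poly to_fract M)"
    and dvdM: "\<And>P. \<mu> dvd map_poly to_fract P \<Longrightarrow> M dvd P"
    using fract_divisor_decompose by blast
  have "\<mu> dvd map_poly to_fract Q"
    using dvd by (simp add: Q_def fract_poly_cleared_lueroth_poly dvd_smult flip: \<theta>_eq g_def h_def)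
  then obtain N where QMN: "Q = M * N" using dvdM by (auto elim: dvdE)
  have "Q \<noteq> 0" using deg_Q \<theta> fract_degree_eq_0_iff by force
  then have "M \<noteq> 0" "N \<noteq> 0" using QMN by auto
  then have "degree (swap_vars Q) = degree (swap_vars M) + degree (swap_vars N)"
    by (simp add: QMN degree_mult_eq)
  moreover have "fract_degree \<theta> \<le> degree (swap_vars M)"
    using coeff fract_degree_coeff_monic_le[OF monic \<mu>] by (rule order.trans)
  ultimately have "degree (swap_vars N) = 0" using deg_swap_Q by linarith
  then have "degree Q = degree M"
    using degree_factor_cleared_lueroth_poly[OF cop h nc QMN[unfolded Q_def]] by (simp add: Q_def)
  also have "\<dots> = degree \<mu>" using c by (simp add: \<mu> degree_map_poly)
  finally show ?thesis using deg_Q by simp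
qed

lemma fract_subst_reduced_preimage:
  fixes \<theta> :: "'a::field_gcd poly fract"
  assumes \<theta>: "\<theta> \<notin> range const_fract"
  obtains R where "poly (map_poly (fract_subst \<theta>) R) T_fract = to_fract a"
    and "degree R < fract_degree \<theta>"
proof -
  interpret fract_subst: field_hom "fract_subst \<theta>" by (rule field_hom_fract_subst[OF \<theta>])
  define P where "P = map_poly to_fract (lueroth_poly (fract_num \<theta>) (fract_den \<theta>))"
  define A where "A = map_poly to_fract (map_poly (\<lambda>c. [:c:]) a)"
  have deg_P: "degree P = fract_degree \<theta>"
    by (simp add: P_def degree_map_poly degree_lueroth_poly fract_degree_def)
  then have "P \<noteq> 0" using \<theta> fract_degree_eq_0_iff by force
  have "map_poly (\<lambda>c. eval1 c \<theta>) (map_poly (\<lambda>c. [:c:]) a) = map_poly const_fract a"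
    by (subst map_poly_map_poly) (simp_all add: o_def)
  then have "poly (map_poly (fract_subst \<theta>) A) T_fract = to_fract a"
    by (simp add: A_def map_poly_fract_subst_to_fract[OF \<theta>] flip: eval1_def)
  moreover have "A = A div P * P + A mod P" by simp
  then have "map_poly (fract_subst \<theta>) A =
      map_poly (fract_subst \<theta>) (A div P) * map_poly (fract_subst \<theta>) P +
      map_poly (fract_subst \<theta>) (A mod P)"
    by (metis fract_subst.map_poly_add fract_subst.map_poly_mult)
  ultimately have "poly (map_poly (fract_subst \<theta>) (A mod P)) T_fract = to_fract a"
    using poly_lueroth_poly_T_fract[OF \<theta>] by (simp add: P_def poly_mult)
  moreover have "degree (A mod P) < fract_degree \<theta>"
    using degree_mod_less'[OF \<open>P \<noteq> 0\<close>, of A] \<theta> fract_degree_eq_0_iff[of \<theta>] deg_P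
    by (cases "A mod P = 0") auto
  ultimately show ?thesis using that by blast
qed

text \<open>For \<open>w = p/q\<close>, write \<open>p(T)\<close> and \<open>q(T)\<close> as polynomials of degree \<open>< deg \<theta>\<close> in \<open>T\<close> over
  \<open>k(\<theta>)\<close>. The resulting relation \<open>p(T) - w q(T) = 0\<close> over \<open>k(u, v)\<close> is too short to be
  non-trivial, so \<open>w\<close> is a quotient of two of its coefficients from \<open>k(\<theta>)\<close>.\<close>
lemma gen_field_subset_range_fract_subst:
  fixes \<theta> :: "'a::field_gcd poly fract"
  assumes \<theta>: "\<theta> \<notin> range const_fract" "\<theta> \<in> gen_field u v"
    and min: "\<And>p. p \<in> gen_field_poly u v \<Longrightarrow> p \<noteq> 0 \<Longrightarrow> poly p T_fract = 0 \<Longrightarrow>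
      fract_degree \<theta> \<le> degree p"
  shows "gen_field u v \<subseteq> range (fract_subst \<theta>)"
proof
  interpret fract_subst: field_hom "fract_subst \<theta>" by (rule field_hom_fract_subst[OF \<theta>(1)])
  fix w assume w: "w \<in> gen_field u v"
  obtain R1 where R1: "poly (map_poly (fract_subst \<theta>) R1) T_fract = to_fract (fract_num w)"
    and deg_R1: "degree R1 < fract_degree \<theta>"
    using fract_subst_reduced_preimage[OF \<theta>(1)] by blast
  obtain R2 where R2: "poly (map_poly (fract_subst \<theta>) R2) T_fract = to_fract (fract_den w)"
    and deg_R2: "degree R2 < fract_degree \<theta>"
    using fract_subst_reduced_preimage[OF \<theta>(1)] by blast
  define R where "R = map_poly (fract_subst \<theta>) R1 - smult w (map_poly (fract_subst \<theta>) R2)"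
  have "R \<in> gen_field_poly u v"
    unfolding R_def using w \<theta>(2)
    by (intro gen_field_poly_diff gen_field_poly_smult)
      (auto simp: gen_field_poly_def coeff_map_poly gen_field_fract_subst)
  moreover have "poly R T_fract = 0"
    using R1 R2 fract_num_den_mult[of w] by (simp add: R_def)
  moreover have "degree R < fract_degree \<theta>"
    using deg_R1 deg_R2 unfolding R_def
    by (intro le_less_trans[OF degree_diff_le_max])
      (simp add: degree_map_poly le_less_trans[OF degree_smult_le])
  ultimately have "R = 0" using min by force
  have "R2 \<noteq> 0" using R2 by auto
  then have "fract_subst \<theta> (coeff R1 (degree R2)) = w * fract_subst \<theta> (coeff R2 (degree R2))"
    using arg_cong[OF \<open>R = 0\<close>, of "\<lambda>p. coeff p (degree R2)"] by (simp add: R_def coeff_map_poly)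
  then have "w = fract_subst \<theta> (coeff R1 (degree R2) / coeff R2 (degree R2))"
    using \<open>R2 \<noteq> 0\<close> by (simp add: field_simps)
  then show "w \<in> range (fract_subst \<theta>)" by blast
qed

lemma gen_field_minimal_poly_T_fract:
  assumes "P \<in> gen_field_poly u v" "P \<noteq> 0" "poly P T_fract = 0"
  obtains \<mu> where "\<mu> \<in> gen_field_poly u v" "lead_coeff \<mu> = 1" "poly \<mu> T_fract = 0"
    "\<And>q. q \<in> gen_field_poly u v \<Longrightarrow> poly q T_fract = 0 \<Longrightarrow> \<mu> dvd q"
proof -
  obtain \<mu>0 where \<mu>0: "\<mu>0 \<in> gen_field_poly u v" "\<mu>0 \<noteq> 0" "poly \<mu>0 T_fract = 0"
    and \<mu>0_min: "\<And>q. q \<in> gen_field_poly u v \<Longrightarrow> q \<noteq> 0 \<Longrightarrow> poly q T_fract = 0 \<Longrightarrow>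
      degree \<mu>0 \<le> degree q"
    using ex_has_least_nat[of "\<lambda>q. q \<in> gen_field_poly u v \<and> q \<noteq> 0 \<and> poly q T_fract = 0" P degree]
      assms by blast
  define \<mu> where "\<mu> = smult (inverse (lead_coeff \<mu>0)) \<mu>0"
  have \<mu>: "\<mu> \<in> gen_field_poly u v" "lead_coeff \<mu> = 1" "poly \<mu> T_fract = 0" "degree \<mu> = degree \<mu>0"
    using \<mu>0 unfolding \<mu>_def
    by (auto intro!: gen_field_mult gen_field_inverse simp: gen_field_poly_def)
  have "\<mu> dvd q" if q: "q \<in> gen_field_poly u v" "poly q T_fract = 0" for q
  proof -
    obtain s r where sr: "r \<in> gen_field_poly u v" "q = s * \<mu> + r" "r = 0 \<or> degree r < degree \<mu>"
      using gen_field_poly_division[OF q(1) \<mu>(1)] \<mu>(2) by force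
    have "poly r T_fract = 0" using q(2) \<mu>(3) sr(2) by (simp add: poly_mult)
    then have "r = 0" using sr \<mu>(4) \<mu>0_min[of r] by force
    then show ?thesis using sr(2) by simp
  qed
  then show ?thesis using that \<mu>(1-3) by blast
qed

text \<open>The minimal polynomial of \<open>T\<close> over \<open>k(u, v)\<close> divides \<open>g(Z) - \<theta> h(Z)\<close>, and by the choice
  of \<open>\<theta>\<close> its non-constant coefficients have degree at least \<open>deg \<theta>\<close>.\<close>
lemma fract_degree_le_degree_gen_field_annihilator:
  fixes \<theta> :: "'a::field_gcd poly fract"
  assumes \<theta>: "\<theta> \<notin> range const_fract" "\<theta> \<in> gen_field u v"
    and \<theta>_min: "\<And>w. w \<in> gen_field u v \<Longrightarrow> w \<notin> range const_fract \<Longrightarrow>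
      fract_degree \<theta> \<le> fract_degree w"
    and p: "p \<in> gen_field_poly u v" "p \<noteq> 0" "poly p T_fract = 0"
  shows "fract_degree \<theta> \<le> degree p"
proof -
  define P where
    "P = map_poly const_fract (fract_num \<theta>) - smult \<theta> (map_poly const_fract (fract_den \<theta>))"
  have "P = map_poly (fract_subst \<theta>)
      (map_poly to_fract (lueroth_poly (fract_num \<theta>) (fract_den \<theta>)))"
    by (simp add: P_def map_poly_fract_subst_to_fract[OF \<theta>(1)] eval1_lueroth_poly)
  then have P_root: "poly P T_fract = 0" and "degree P = fract_degree \<theta>"
    using poly_lueroth_poly_T_fract[OF \<theta>(1)]
      field_hom.hom_eq_0_iff[OF field_hom_fract_subst[OF \<theta>(1)]]
    by (simp_all add: degree_map_poly degree_lueroth_poly fract_degree_def)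
  then have "P \<noteq> 0" using \<theta>(1) fract_degree_eq_0_iff by force
  have P_gen: "P \<in> gen_field_poly u v"
    using \<theta>(2) by (auto simp: P_def gen_field_poly_def coeff_map_poly
        intro!: gen_field_diff gen_field_mult const_in_gen_field)
  obtain \<mu> where \<mu>: "\<mu> \<in> gen_field_poly u v" "lead_coeff \<mu> = 1" "poly \<mu> T_fract = 0"
    and \<mu>_dvd: "\<And>q. q \<in> gen_field_poly u v \<Longrightarrow> poly q T_fract = 0 \<Longrightarrow> \<mu> dvd q"
    using gen_field_minimal_poly_T_fract[OF P_gen \<open>P \<noteq> 0\<close> P_root] by blast
  obtain j where j: "coeff \<mu> j \<notin> range const_fract"
    using root_T_fract_nonconstant_coeff[of \<mu>] \<mu>(2,3) by force
  then have "fract_degree \<theta> \<le> fract_degree (coeff \<mu> j)"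
    using \<theta>_min \<mu>(1) by (simp add: gen_field_poly_def)
  then have "degree \<mu> = fract_degree \<theta>"
    using degree_monic_factor_lueroth_poly[OF \<theta>(1) \<mu>(2)] \<mu>_dvd[OF P_gen P_root]
    by (simp add: P_def)
  then show ?thesis using \<mu>_dvd[of p] p by (metis dvd_imp_degree_le)
qed

theorem lueroth_gen_field:
  fixes u v :: "'a::field_gcd poly fract"
  assumes "\<not> (u \<in> range const_fract \<and> v \<in> range const_fract)"
  obtains \<theta> where "\<theta> \<notin> range const_fract" "\<theta> \<in> gen_field u v"
    "gen_field u v \<subseteq> range (fract_subst \<theta>)"
proof -
  have "\<exists>w. w \<in> gen_field u v \<and> w \<notin> range const_fract"
    using assms fst_in_gen_field snd_in_gen_field by blast
  then obtain \<theta> where \<theta>: "\<theta> \<in> gen_field u v" "\<theta> \<notin> range const_fract"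
    and \<theta>_min: "\<And>w. w \<in> gen_field u v \<Longrightarrow> w \<notin> range const_fract \<Longrightarrow> fract_degree \<theta> \<le> fract_degree w"
    using ex_has_least_nat[of "\<lambda>w. w \<in> gen_field u v \<and> w \<notin> range const_fract" _ fract_degree]
    by blast
  then have "gen_field u v \<subseteq> range (fract_subst \<theta>)"
    by (intro gen_field_subset_range_fract_subst fract_degree_le_degree_gen_field_annihilator) auto
  then show ?thesis using that \<theta> by blast
qed

definition has_bounded_parametrization :: "'a::field poly poly \<Rightarrow> bool" where
  "has_bounded_parametrization F \<longleftrightarrow>
    (\<exists>x y z :: 'a poly.
        z \<noteq> 0 \<and>
        \<not> (to_fract x / to_fract z \<in> range const_fract \<and>
           to_fract y / to_fract z \<in> range const_fract) \<and>
        eval2 F (to_fract x / to_fract z) (to_fract y / to_fract z) = 0 \<and>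
        max (degree x) (max (degree y) (degree z)) \<le> degX F + degY F)"

lemma k_rational_iff_gen_field:
  "k_rational F \<longleftrightarrow> irreducible F \<and>
    (\<exists>u v. (\<forall>G. eval2 G u v = 0 \<longleftrightarrow> F dvd G) \<and> gen_field u v = UNIV)"
  unfolding k_rational_def set_eq_iff gen_field_iff by simp

lemma gen_field_UNIV_if_T_fract:
  fixes u v :: "'a::field_gcd poly fract"
  assumes "T_fract \<in> gen_field u v"
  shows "gen_field u v = UNIV"
proof -
  have "eval1 (fract_num w) T_fract / eval1 (fract_den w) T_fract \<in> gen_field u v" for w
    using assms by (intro gen_field_divide gen_field_eval1)
  then show ?thesis by (simp flip: fract_num_den add: set_eq_iff)
qed

lemma gen_field_const:
  "gen_field (const_fract a) (const_fract b) \<subseteq> range (const_fract :: 'a::field \<Rightarrow> _)"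
proof -
  have "eval1 c (const_fract a) = const_fract (poly c a)" for c
    by (simp add: eval1_def const_fract.poly_map_poly)
  then have "map_poly (\<lambda>c. eval1 c (const_fract a)) G =
      map_poly const_fract (map_poly (\<lambda>c. poly c a) G)"
    for G by (subst map_poly_map_poly) (simp_all add: o_def)
  then have "eval2 G (const_fract a) (const_fract b) =
      const_fract (poly (map_poly (\<lambda>c. poly c a) G) b)" for G
    by (simp add: eval2_conv_eval1 const_fract.poly_map_poly)
  then show ?thesis by (auto simp: gen_field_def) (metis const_fract.hom_divide rangeI)
qed

lemma common_denominator:
  fixes u v :: "'a::field_gcd poly fract"
  obtains x y z where "z \<noteq> 0" "u = to_fract x / to_fract z" "v = to_fract y / to_fract z"
    "max (degree x) (max (degree y) (degree z)) \<le> fract_degree u + fract_degree v"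
proof
  let ?x = "fract_num u * fract_den v" and ?y = "fract_den u * fract_num v"
    and ?z = "fract_den u * fract_den v"
  show "?z \<noteq> 0" by simp
  show "u = to_fract ?x / to_fract ?z" "v = to_fract ?y / to_fract ?z"
    by (subst fract_num_den, simp)+
  have "degree p \<le> fract_degree u + fract_degree v"
    if "p \<in> {?x, ?y, ?z}" for p
    using that by (auto intro!: order.trans[OF degree_mult_le] add_mono simp: fract_degree_def)
  then show "max (degree ?x) (max (degree ?y) (degree ?z)) \<le> fract_degree u + fract_degree v"
    by simp
qed

lemma k_rational_imp_has_bounded_parametrization:
  fixes F :: "'a::field_gcd poly poly"
  assumes "k_rational F"
  shows "has_bounded_parametrization F"
proof -
  obtain u v where irr: "irreducible F" and ker: "\<And>G. eval2 G u v = 0 \<longleftrightarrow> F dvd G"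
    and gen: "gen_field u v = UNIV"
    using assms unfolding k_rational_iff_gen_field by blast
  have "T_fract \<in> gen_field u v" using gen by simp
  then obtain G H where GH: "eval2 H u v \<noteq> 0" "T_fract = eval2 G u v / eval2 H u v"
    unfolding gen_field_iff by blast
  have nc: "\<not> (u \<in> range const_fract \<and> v \<in> range const_fract)"
    using gen gen_field_const T_fract_not_const by blast
  have F: "eval2 F u v = 0" "F \<noteq> 0" using ker irr by auto
  have "fract_degree u \<le> degY F"
    using fract_degree_le_degree_if_generates_T[OF _ F(2,1) GH] fract_degree_eq_0_iff[of u]
    by (cases "u \<in> range const_fract") (auto simp: degY_def)
  moreover have "fract_degree v \<le> degX F"
    using fract_degree_le_degree_if_generates_T[of v "swap_vars F" u "swap_vars H" "swap_vars G"]
      fract_degree_eq_0_iff[of v] F GH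
    by (cases "v \<in> range const_fract") (auto simp: eval2_swap_vars degree_swap_vars)
  moreover obtain x y z where "z \<noteq> 0" "u = to_fract x / to_fract z" "v = to_fract y / to_fract z"
    "max (degree x) (max (degree y) (degree z)) \<le> fract_degree u + fract_degree v"
    using common_denominator .
  ultimately show ?thesis
    unfolding has_bounded_parametrization_def using nc F(1)
    by (intro exI[of _ x] exI[of _ y] exI[of _ z]) auto
qed

lemma eval2_fract_subst:
  assumes "\<theta> \<notin> range const_fract"
  shows "fract_subst \<theta> (eval2 G a b) = eval2 G (fract_subst \<theta> a) (fract_subst \<theta> b)"
proof -
  interpret fract_subst: field_hom "fract_subst \<theta>" by (rule field_hom_fract_subst[OF assms])
  have "fract_subst \<theta> (eval1 c a) = eval1 c (fract_subst \<theta> a)" for c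
    by (induction c) (simp_all add: eval1_pCons assms)
  then show ?thesis by (induction G) (simp_all add: eval2_pCons)
qed

lemma has_bounded_parametrization_imp_k_rational:
  fixes F :: "'a::field_gcd poly poly"
  assumes irr: "irreducible F" and "has_bounded_parametrization F"
  shows "k_rational F"
proof -
  obtain u v where nc: "\<not> (u \<in> range const_fract \<and> v \<in> range const_fract)"
    and F: "eval2 F u v = 0"
    using assms(2) unfolding has_bounded_parametrization_def by blast
  obtain \<theta> where \<theta>: "\<theta> \<notin> range const_fract" "\<theta> \<in> gen_field u v"
    and gen: "gen_field u v \<subseteq> range (fract_subst \<theta>)"
    using lueroth_gen_field[OF nc] by blast
  interpret fract_subst: field_hom "fract_subst \<theta>" by (rule field_hom_fract_subst[OF \<theta>(1)])
  obtain a b where ab: "u = fract_subst \<theta> a" "v = fract_subst \<theta> b"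
    using gen fst_in_gen_field snd_in_gen_field by blast
  have eval2_ab: "fract_subst \<theta> (eval2 G a b) = eval2 G u v" for G
    by (simp add: ab eval2_fract_subst[OF \<theta>(1)])
  have ker: "eval2 G a b = 0 \<longleftrightarrow> F dvd G" for G
    using eval2_eq_0_iff_dvd[OF irr nc F, of G] fract_subst.hom_eq_0_iff[of "eval2 G a b"]
    by (simp add: eval2_ab)
  obtain G H where GH: "eval2 H u v \<noteq> 0" "\<theta> = eval2 G u v / eval2 H u v"
    using \<theta>(2) unfolding gen_field_iff by blast
  have "fract_subst \<theta> (eval2 G a b / eval2 H a b) = fract_subst \<theta> T_fract"
    unfolding fract_subst.hom_divide eval2_ab fract_subst_T_fract[OF \<theta>(1)]
    by (rule GH(2)[symmetric])
  then have "T_fract = eval2 G a b / eval2 H a b" by (metis fract_subst.hom_inject)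
  moreover have "eval2 H a b \<noteq> 0" using GH(1) eval2_ab[of H] by auto
  ultimately have "T_fract \<in> gen_field a b" unfolding gen_field_iff by blast
  then show ?thesis
    unfolding k_rational_iff_gen_field using irr ker gen_field_UNIV_if_T_fract by blast
qed

lemma k_rational_iff_has_bounded_parametrization:
  fixes F :: "'a::field_gcd poly poly"
  assumes "irreducible F"
  shows "k_rational F \<longleftrightarrow> has_bounded_parametrization F"
  using assms k_rational_imp_has_bounded_parametrization has_bounded_parametrization_imp_k_rational
  by blast

section \<open>Transfer along a field isomorphism\<close>

locale field_iso = comm_ring_iso f for f :: "'a::field \<Rightarrow> 'b::field"
begin

interpretation map_poly: comm_ring_iso "map_poly f"
  by (rule comm_ring_iso_map_poly)

interpretation map_poly2: comm_ring_iso "map_poly (map_poly f)"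
  by (rule map_poly.comm_ring_iso_map_poly)

lemma irreducible_map_poly2_iff: "irreducible (map_poly (map_poly f) F) \<longleftrightarrow> irreducible F"
  by simp

definition map_fract :: "'a poly fract \<Rightarrow> 'b poly fract" where
  "map_fract x = (let r = SOME r. snd r \<noteq> 0 \<and> x = Fract (fst r) (snd r)
    in Fract (map_poly f (fst r)) (map_poly f (snd r)))"

lemma map_fract_Fract:
  assumes b: "b \<noteq> 0"
  shows "map_fract (Fract a b) = Fract (map_poly f a) (map_poly f b)"
proof -
  define r where "r = (SOME r. snd r \<noteq> 0 \<and> Fract a b = Fract (fst r) (snd r))"
  have "snd r \<noteq> 0 \<and> Fract a b = Fract (fst r) (snd r)"
    unfolding r_def by (rule someI[of _ "(a, b)"]) (simp add: b)
  then have r: "snd r \<noteq> 0" "a * snd r = fst r * b" using b by (auto simp: eq_fract)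
  then have "map_poly f a * map_poly f (snd r) = map_poly f (fst r) * map_poly f b"
    by (metis map_poly.hom_mult)
  then have "Fract (map_poly f (fst r)) (map_poly f (snd r)) = Fract (map_poly f a) (map_poly f b)"
    using r(1) b by (simp add: eq_fract)
  then show ?thesis unfolding map_fract_def r_def[symmetric] by (simp add: Let_def)
qed

lemma comm_ring_iso_map_fract: "comm_ring_iso map_fract"
proof
  fix x y :: "'a poly fract"
  obtain a b c d where x: "x = Fract a b" "b \<noteq> 0" and y: "y = Fract c d" "d \<noteq> 0"
    by (metis Fract_cases)
  show "map_fract (x + y) = map_fract x + map_fract y"
    using x y by (simp add: map_fract_Fract)
  show "map_fract (x * y) = map_fract x * map_fract y"
    using x y by (simp add: map_fract_Fract)
next
  show "map_fract 1 = 1" using map_fract_Fract[of 1 1] by (simp add: One_fract_def)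
next
  have "inj map_fract"
  proof (rule injI)
    fix x y :: "'a poly fract"
    assume eq: "map_fract x = map_fract y"
    obtain a b c d where x: "x = Fract a b" "b \<noteq> 0" and y: "y = Fract c d" "d \<noteq> 0"
      by (metis Fract_cases)
    then have "map_poly f a * map_poly f d = map_poly f c * map_poly f b"
      using eq by (simp add: map_fract_Fract eq_fract)
    then have "a * d = c * b" by (metis map_poly.hom_mult map_poly.hom_inject)
    then show "x = y" using x y by (simp add: eq_fract)
  qed
  moreover have "\<exists>x. y = map_fract x" for y
  proof -
    obtain c d where y: "y = Fract c d" "d \<noteq> 0" by (metis Fract_cases)
    obtain a b where "c = map_poly f a" "d = map_poly f b"
      using map_poly.bij by (metis bij_pointE)
    then show ?thesis using y by (metis map_fract_Fract map_poly.hom_zero)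
  qed
  ultimately show "bij map_fract" by (simp add: bij_def surj_def)
qed

interpretation map_fract: comm_ring_iso map_fract
  by (rule comm_ring_iso_map_fract)

lemma map_fract_divide: "map_fract (x / y) = map_fract x / map_fract y"
proof (cases "y = 0")
  case False
  then have "map_fract (x / y) * map_fract y = map_fract x" by (simp flip: map_fract.hom_mult)
  then show ?thesis using False by (simp add: field_simps)
qed simp

lemma map_fract_to_fract [simp]: "map_fract (to_fract p) = to_fract (map_poly f p)"
  by (simp add: Defs.to_fract_def map_fract_Fract)

lemma map_fract_const_fract [simp]: "map_fract (const_fract c) = const_fract (f c)"
  by (simp add: const_fract_def map_poly_pCons)

lemma map_fract_eval2:
  "map_fract (eval2 G u v) = eval2 (map_poly (map_poly f) G) (map_fract u) (map_fract v)"
proof -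
  have "map_fract (eval1 a u) = eval1 (map_poly f a) (map_fract u)" for a
    by (induction a) (simp_all add: eval1_pCons map_poly_pCons)
  then show ?thesis by (induction G) (simp_all add: eval2_pCons map_poly_pCons)
qed

lemma gen_field_map_fract: "gen_field (map_fract u) (map_fract v) = map_fract ` gen_field u v"
proof (intro equalityI subsetI)
  fix w assume "w \<in> gen_field (map_fract u) (map_fract v)"
  then obtain G H where "eval2 (map_poly (map_poly f) H) (map_fract u) (map_fract v) \<noteq> 0"
    "w = eval2 (map_poly (map_poly f) G) (map_fract u) (map_fract v) /
      eval2 (map_poly (map_poly f) H) (map_fract u) (map_fract v)"
    unfolding gen_field_iff by (metis map_poly2.bij bij_pointE)
  then have "eval2 H u v \<noteq> 0" "w = map_fract (eval2 G u v / eval2 H u v)"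
    by (simp_all add: map_fract_divide flip: map_fract_eval2)
  then show "w \<in> map_fract ` gen_field u v"
    by (intro image_eqI[of _ _ "eval2 G u v / eval2 H u v"]) (auto simp: gen_field_iff)
next
  fix w assume "w \<in> map_fract ` gen_field u v"
  then obtain G H where "eval2 H u v \<noteq> 0" "w = map_fract (eval2 G u v / eval2 H u v)"
    by (auto simp: gen_field_iff)
  then show "w \<in> gen_field (map_fract u) (map_fract v)"
    unfolding gen_field_iff
    by (intro exI[of _ "map_poly (map_poly f) G"] exI[of _ "map_poly (map_poly f) H"])
      (simp add: map_fract_divide flip: map_fract_eval2)
qed

lemma k_rational_map_poly2_iff: "k_rational (map_poly (map_poly f) F) \<longleftrightarrow> k_rational F"
proof -
  have "gen_field (map_fract u) (map_fract v) = UNIV \<longleftrightarrow> gen_field u v = UNIV" for u v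
    using map_fract.bij by (metis gen_field_map_fract bij_is_inj bij_is_surj inj_image_eq_iff)
  moreover have "(\<forall>G. eval2 G (map_fract u) (map_fract v) = 0 \<longleftrightarrow> map_poly (map_poly f) F dvd G) \<longleftrightarrow>
      (\<forall>G. eval2 G u v = 0 \<longleftrightarrow> F dvd G)" for u v
    by (subst map_poly2.all_hom_iff) (simp flip: map_fract_eval2)
  ultimately show ?thesis
    unfolding k_rational_iff_gen_field by (subst map_fract.ex_hom_iff map_fract.ex_hom_iff; simp)+
qed

lemma map_fract_in_range_const_fract_iff:
  "map_fract w \<in> range const_fract \<longleftrightarrow> w \<in> range const_fract"
  by (metis (no_types, lifting) bij_pointE bij rangeE rangeI map_fract_const_fract
      map_fract.hom_inject)

lemma has_bounded_parametrization_map_poly2_iff: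
  "has_bounded_parametrization (map_poly (map_poly f) F) \<longleftrightarrow> has_bounded_parametrization F"
proof -
  have deg: "degX (map_poly (map_poly f) F) = degX F" "degY (map_poly (map_poly f) F) = degY F"
    by (simp_all add: degX_def degY_def degree_map_poly coeff_map_poly)
  have quot:
    "to_fract (map_poly f x) / to_fract (map_poly f z) = map_fract (to_fract x / to_fract z)"
    for x z by (simp add: map_fract_divide)
  show ?thesis
    unfolding has_bounded_parametrization_def
    by (subst map_poly.ex_hom_iff map_poly.ex_hom_iff map_poly.ex_hom_iff; simp)+
      (simp add: deg quot map_fract_in_range_const_fract_iff degree_map_poly flip: map_fract_eval2)
qed

end

text \<open>The gcd of polynomials needs a normalisation on the coefficient field, which an arbitrary
  field does not carry; the theorem is proved for this copy and transferred back.\<close>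

typedef 'a gcd_copy = "UNIV :: 'a::field set"
  morphisms from_gcd_copy to_gcd_copy by simp

setup_lifting type_definition_gcd_copy

instantiation gcd_copy :: (field) field
begin
lift_definition zero_gcd_copy :: "'a gcd_copy" is 0 .
lift_definition one_gcd_copy :: "'a gcd_copy" is 1 .
lift_definition plus_gcd_copy :: "'a gcd_copy \<Rightarrow> 'a gcd_copy \<Rightarrow> 'a gcd_copy" is "(+)" .
lift_definition minus_gcd_copy :: "'a gcd_copy \<Rightarrow> 'a gcd_copy \<Rightarrow> 'a gcd_copy" is "(-)" .
lift_definition uminus_gcd_copy :: "'a gcd_copy \<Rightarrow> 'a gcd_copy" is uminus .
lift_definition times_gcd_copy :: "'a gcd_copy \<Rightarrow> 'a gcd_copy \<Rightarrow> 'a gcd_copy" is "(*)" .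
lift_definition inverse_gcd_copy :: "'a gcd_copy \<Rightarrow> 'a gcd_copy" is inverse .
lift_definition divide_gcd_copy :: "'a gcd_copy \<Rightarrow> 'a gcd_copy \<Rightarrow> 'a gcd_copy" is "(/)" .
instance by standard (transfer; simp add: algebra_simps divide_inverse)+
end

instantiation gcd_copy :: (field)
  "{unique_euclidean_ring, normalization_euclidean_semiring, normalization_semidom_multiplicative}"
begin
definition [simp]: "normalize_gcd_copy = (\<lambda>x::'a gcd_copy. if x = 0 then 0 else (1::'a gcd_copy))"
definition [simp]: "unit_factor_gcd_copy = (\<lambda>x::'a gcd_copy. x)"
definition [simp]: "modulo_gcd_copy = (\<lambda>x y::'a gcd_copy. if y = 0 then x else (0::'a gcd_copy))"
definition [simp]: "euclidean_size_gcd_copy = (\<lambda>x::'a gcd_copy. if x = 0 then 0 else 1::nat)"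
definition [simp]: "division_segment (x :: 'a gcd_copy) = (1::'a gcd_copy)"
instance
  by standard (simp_all add: dvd_field_iff field_split_simps split: if_splits)
end

instantiation gcd_copy :: (field) euclidean_ring_gcd
begin
definition "gcd_gcd_copy = (Euclidean_Algorithm.gcd :: 'a gcd_copy \<Rightarrow> _)"
definition "lcm_gcd_copy = (Euclidean_Algorithm.lcm :: 'a gcd_copy \<Rightarrow> _)"
definition "Gcd_gcd_copy = (Euclidean_Algorithm.Gcd :: 'a gcd_copy set \<Rightarrow> _)"
definition "Lcm_gcd_copy = (Euclidean_Algorithm.Lcm :: 'a gcd_copy set \<Rightarrow> _)"
instance
  by standard (simp_all add: gcd_gcd_copy_def lcm_gcd_copy_def Gcd_gcd_copy_def Lcm_gcd_copy_def)
end

instance gcd_copy :: (field) field_gcd ..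

lemma field_iso_to_gcd_copy: "field_iso (to_gcd_copy :: 'a::field \<Rightarrow> 'a gcd_copy)"
proof
  fix x y :: 'a
  show "to_gcd_copy (x + y) = to_gcd_copy x + to_gcd_copy y"
    by (simp add: plus_gcd_copy_def to_gcd_copy_inverse)
  show "to_gcd_copy (x * y) = to_gcd_copy x * to_gcd_copy y"
    by (simp add: times_gcd_copy_def to_gcd_copy_inverse)
next
  show "to_gcd_copy 1 = (1 :: 'a gcd_copy)" by (simp add: one_gcd_copy_def)
  show "bij (to_gcd_copy :: 'a \<Rightarrow> 'a gcd_copy)"
    by (metis bijI' to_gcd_copy_inverse from_gcd_copy_inverse UNIV_I)
qed

theorem mainTheorem5:
  fixes F :: "'a::field poly poly"
  assumes "irreducible F"
  shows "k_rational F \<longleftrightarrow>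
    (\<exists>x y z :: 'a poly.
        z \<noteq> 0 \<and>
        \<not> (to_fract x / to_fract z \<in> range const_fract \<and>
           to_fract y / to_fract z \<in> range const_fract) \<and>
        eval2 F (to_fract x / to_fract z) (to_fract y / to_fract z) = 0 \<and>
        max (degree x) (max (degree y) (degree z)) \<le> degX F + degY F)"
proof -
  interpret field_iso "to_gcd_copy :: 'a \<Rightarrow> 'a gcd_copy" by (rule field_iso_to_gcd_copy)
  have "irreducible (map_poly (map_poly to_gcd_copy) F)"
    using assms by (simp add: irreducible_map_poly2_iff)
  then show ?thesis
    unfolding has_bounded_parametrization_def [symmetric]
    using k_rational_iff_has_bounded_parametrization
      k_rational_map_poly2_iff has_bounded_parametrization_map_poly2_iff by blast
qed

end
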